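(* Let $\Pi_{\mathfrak l}\subset\Pi$ be admissible and let $\tau$ be an even permutation of $\Pi$ which is an automorphism of the Dynkin diagram and coincides with $-w_{\mathfrak l}$ on $\Pi_{\mathfrak l}$; extend $\tau$ linearly to $\mathfrak h^*$ and put $\tilde\mu=w_{\mathfrak l}\tau(\mu)$ for $\mu\in\bar\Pi_{\mathfrak l}$. Suppose $(\mu+\tilde\mu,\alpha)=0$ for all $\mu\in\bar\Pi_{\mathfrak l}$, $\alpha\in\Pi_{\mathfrak l}$. Then $\tau\circ w_{\mathfrak l}=w_{\mathfrak l}\circ\tau$ on the root lattice $\mathbb Z\Pi$.
   Context: Setting: $\mathfrak g$ is one of $\mathfrak{gl}(N|2\mathbf m)$, $\mathfrak{osp}(2\mathbf n+1|2\mathbf m)$, $\mathfrak{osp}(2\mathbf n|2\mathbf m)$, $\mathfrak{spo}(2\mathbf n|2\mathbf m)$ with natural module $V=\mathbb C^{N|2\mathbf m}$, homogeneous weight basis $v_1,\dots,v_{N+2\mathbf m}$ of weights $\zeta_1,\dots,\zeta_{N+2\mathbf m}$, $|v_i|=1$ iff $i\le\mathbf m$ or $i>\mathbf m+N$; $i'=N+2\mathbf m+1-i$; standard form $(\varepsilon_i,\varepsilon_j)=\delta_{ij}=-(\delta_i,\delta_j)$, $(\varepsilon_i,\delta_j)=0$ on $\mathfrak h^*$; standard simple roots $\Pi$ ($\delta_i-\delta_{i+1}$, $\delta_{\mathbf m}-\varepsilon_1$, $\varepsilon_i-\varepsilon_{i+1}$, then $\varepsilon_N-\delta_{\mathbf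 m+1},\dots,\delta_{2\mathbf m-1}-\delta_{2\mathbf m}$ for $\mathfrak{gl}$, or tail root $\varepsilon_{\mathbf n}$, $\varepsilon_{\mathbf n-1}+\varepsilon_{\mathbf n}$, $2\varepsilon_{\mathbf n}$ respectively); $\bar\Pi_{\mathfrak l}=\Pi\setminus\Pi_{\mathfrak l}$. An operator on $\mathfrak h^*$ is even if it maps even roots to even roots and odd to odd. For $\Pi_{\mathfrak l}\subset\Pi$, $\mathfrak l=\bigoplus_i\mathfrak l_i$ is generated by $e_{\pm\alpha}$, $\alpha\in\Pi_{\mathfrak l}$, $\mathfrak l_i$ acting naturally on the span of basis vectors $v_{j_1},\dots,v_{j_r}$ ($j_1<\dots<j_r$), $\hat{\mathfrak l}_i$ its $\mathfrak{gl}$-extension if of type A; $w_{\mathfrak l_i}$ is the linear operator $\zeta_{j_s}\mapsto\zeta_{j_{r+1-s}}$ fixing other $\zeta_j$ ($j,j'\notin\{j_1,..,j_r\}$), and $w_{\mathfrak l}=\prod_iw_{\mathfrak l_i}$. $\Pi_{\mathfrak l}$ is admissible if the grading induced on each span of $v_{j_1},\dots,v_{j_r}$ is symmetric ($|v_{j_s}|=|v_{j_{r+1-s}}|$) with minimal number of odd simple roots of $\hat{\mathfrak l}_i$ among symmetric gradings. *)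

theory Defs
  imports Complex_Main
begin

text \<open>
  Kinds: GL = gl(N|2m), B = osp(2n+1|2m), D = osp(2n|2m), C = spo(2n|2m).
  The parameter nn stands for N in the GL case and for n otherwise; mm is m.
  Elements of h^* are modelled as coordinate vectors nat => real: coordinate c
  is the coefficient of zeta_c for c in coords (zeta_1..zeta_(N+2m) for GL,
  zeta_1..zeta_(m+n) otherwise, these being delta_1..delta_m, epsilon_1,..).
\<close>

datatype kind = GL | B | D | C

definition dimN :: "kind \<Rightarrow> nat \<Rightarrow> nat" where
  "dimN k nn = (case k of GL \<Rightarrow> nn | B \<Rightarrow> 2*nn+1 | D \<Rightarrow> 2*nn | C \<Rightarrow> 2*nn)"

text \<open>number of basis vectors of V\<close>
definition tot :: "kind \<Rightarrow> nat \<Rightarrow> nat \<Rightarrow> nat" where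
  "tot k nn mm = dimN k nn + 2*mm"

text \<open>i' = N + 2m + 1 - i\<close>
definition prim :: "kind \<Rightarrow> nat \<Rightarrow> nat \<Rightarrow> nat \<Rightarrow> nat" where
  "prim k nn mm i = tot k nn mm + 1 - i"

text \<open>|v_i| = 1 iff i <= m or i > m + N\<close>
definition odd_idx :: "kind \<Rightarrow> nat \<Rightarrow> nat \<Rightarrow> nat \<Rightarrow> bool" where
  "odd_idx k nn mm i = (i \<le> mm \<or> mm + dimN k nn < i)"

text \<open>number of independent coordinates of h^*\<close>
definition rk :: "kind \<Rightarrow> nat \<Rightarrow> nat \<Rightarrow> nat" where
  "rk k nn mm = (if k = GL then tot k nn mm else mm + nn)"

definition coords :: "kind \<Rightarrow> nat \<Rightarrow> nat \<Rightarrow> nat set" where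
  "coords k nn mm = {1..rk k nn mm}"

definition unitv :: "nat \<Rightarrow> nat \<Rightarrow> real" where
  "unitv i = (\<lambda>c. if c = i then 1 else 0)"

definition vadd :: "(nat \<Rightarrow> real) \<Rightarrow> (nat \<Rightarrow> real) \<Rightarrow> nat \<Rightarrow> real" where
  "vadd x y = (\<lambda>c. x c + y c)"

definition vsmul :: "real \<Rightarrow> (nat \<Rightarrow> real) \<Rightarrow> nat \<Rightarrow> real" where
  "vsmul a x = (\<lambda>c. a * x c)"

definition vneg :: "(nat \<Rightarrow> real) \<Rightarrow> nat \<Rightarrow> real" where
  "vneg x = (\<lambda>c. - x c)"

definition vzero :: "nat \<Rightarrow> real" where
  "vzero = (\<lambda>c. 0)"

definition vsum :: "('i \<Rightarrow> nat \<Rightarrow> real) \<Rightarrow> 'i set \<Rightarrow> nat \<Rightarrow> real" where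
  "vsum f A = (\<lambda>c. \<Sum>i\<in>A. f i c)"

text \<open>The weights zeta_i of v_i (zeta_(i') = - zeta_i in the orthosymplectic cases,
  the middle weight of osp(2n+1|2m) being 0).\<close>
definition zeta :: "kind \<Rightarrow> nat \<Rightarrow> nat \<Rightarrow> nat \<Rightarrow> nat \<Rightarrow> real" where
  "zeta k nn mm i =
     (if k = GL then unitv i
      else if i \<le> mm + nn then unitv i
      else if prim k nn mm i \<le> mm + nn then vneg (unitv (prim k nn mm i))
      else vzero)"

text \<open>standard form: (eps_i,eps_j) = delta_ij = -(delta_i,delta_j), (eps,delta) = 0\<close>
definition form :: "kind \<Rightarrow> nat \<Rightarrow> nat \<Rightarrow> (nat \<Rightarrow> real) \<Rightarrow> (nat \<Rightarrow> real) \<Rightarrow> real" where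
  "form k nn mm x y =
     (\<Sum>c\<in>coords k nn mm. (if odd_idx k nn mm c then -1 else 1) * x c * y c)"

definition nsr :: "kind \<Rightarrow> nat \<Rightarrow> nat \<Rightarrow> nat" where
  "nsr k nn mm = (if k = GL then tot k nn mm - 1 else mm + nn)"

text \<open>simple root alpha_a, a = 1..nsr: zeta_a - zeta_(a+1), plus the tail root
  eps_n, eps_(n-1)+eps_n, 2 eps_n in the cases B, D, C.\<close>
definition simple :: "kind \<Rightarrow> nat \<Rightarrow> nat \<Rightarrow> nat \<Rightarrow> nat \<Rightarrow> real" where
  "simple k nn mm a =
     (if k \<noteq> GL \<and> a = mm + nn then
        (case k of B \<Rightarrow> zeta k nn mm (mm+nn)
           | D \<Rightarrow> vadd (zeta k nn mm (mm+nn-1)) (zeta k nn mm (mm+nn))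
           | C \<Rightarrow> vsmul 2 (zeta k nn mm (mm+nn))
           | GL \<Rightarrow> vzero)
      else vadd (zeta k nn mm a) (vneg (zeta k nn mm (a+1))))"

definition sr_idx :: "kind \<Rightarrow> nat \<Rightarrow> nat \<Rightarrow> nat set" where
  "sr_idx k nn mm = {1..nsr k nn mm}"

definition sr_odd :: "kind \<Rightarrow> nat \<Rightarrow> nat \<Rightarrow> nat \<Rightarrow> bool" where
  "sr_odd k nn mm a =
     (if k \<noteq> GL \<and> a = mm + nn then False
      else odd_idx k nn mm a \<noteq> odd_idx k nn mm (a+1))"

definition root_lattice :: "kind \<Rightarrow> nat \<Rightarrow> nat \<Rightarrow> (nat \<Rightarrow> real) set" where
  "root_lattice k nn mm =
     {vsum (\<lambda>a. vsmul (of_int (z a)) (simple k nn mm a)) (sr_idx k nn mm) | z :: nat \<Rightarrow> int. True}"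

definition dyn_edges :: "kind \<Rightarrow> nat \<Rightarrow> nat \<Rightarrow> nat set \<Rightarrow> (nat \<times> nat) set" where
  "dyn_edges k nn mm S =
     {(a,b). a \<in> S \<and> b \<in> S \<and> a \<noteq> b \<and> form k nn mm (simple k nn mm a) (simple k nn mm b) \<noteq> 0}"

text \<open>connected component of S containing a (the simple roots of l_i)\<close>
definition comp :: "kind \<Rightarrow> nat \<Rightarrow> nat \<Rightarrow> nat set \<Rightarrow> nat \<Rightarrow> nat set" where
  "comp k nn mm S a = {b \<in> S. (a, b) \<in> (dyn_edges k nn mm S)\<^sup>*}"

text \<open>Indices of the basis vectors touched by alpha_a (the two vectors of its gl(1|1) / gl(2)
  inside a type A component; the tail root of D touches v_(m+n-1) and v_((m+n)')).\<close>
definition sr_supp :: "kind \<Rightarrow> nat \<Rightarrow> nat \<Rightarrow> nat \<Rightarrow> nat set" where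
  "sr_supp k nn mm a =
     (if k \<noteq> GL \<and> a = mm + nn then
        (case k of D \<Rightarrow> {mm+nn-1, prim k nn mm (mm+nn)}
                 | _ \<Rightarrow> {mm+nn, prim k nn mm (mm+nn)})
      else {a, a+1})"

text \<open>A component is of orthosymplectic type if it contains the tail root (B, C) resp.
  both fork roots alpha_(m+n-1), alpha_(m+n) (D); otherwise it is of type A.\<close>
definition osp_comp :: "kind \<Rightarrow> nat \<Rightarrow> nat \<Rightarrow> nat set \<Rightarrow> bool" where
  "osp_comp k nn mm Cp =
     (case k of GL \<Rightarrow> False
        | D \<Rightarrow> mm+nn-1 \<in> Cp \<and> mm+nn \<in> Cp
        | _ \<Rightarrow> mm+nn \<in> Cp)"

text \<open>the index set {j_1 < ... < j_r} of the natural module of l_i\<close>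
definition jset :: "kind \<Rightarrow> nat \<Rightarrow> nat \<Rightarrow> nat set \<Rightarrow> nat set" where
  "jset k nn mm Cp =
     (if osp_comp k nn mm Cp then {Min Cp .. prim k nn mm (Min Cp)}
      else (\<Union>a\<in>Cp. sr_supp k nn mm a))"

definition jlist :: "kind \<Rightarrow> nat \<Rightarrow> nat \<Rightarrow> nat set \<Rightarrow> nat list" where
  "jlist k nn mm Cp = sorted_list_of_set (jset k nn mm Cp)"

text \<open>index map of w_(l_i): j_s |-> j_(r+1-s); in the orthosymplectic cases it is
  extended compatibly with zeta_(j') = - zeta_j; identity elsewhere.\<close>
definition wperm :: "kind \<Rightarrow> nat \<Rightarrow> nat \<Rightarrow> nat set \<Rightarrow> nat \<Rightarrow> nat" where
  "wperm k nn mm Cp j =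
     (let J = jset k nn mm Cp; js = jlist k nn mm Cp;
          rv = (\<lambda>i. js ! (length js - 1 - card {x\<in>J. x < i}))
      in if j \<in> J then rv j
         else if k \<noteq> GL \<and> prim k nn mm j \<in> J then prim k nn mm (rv (prim k nn mm j))
         else j)"

definition lin_of_perm :: "kind \<Rightarrow> nat \<Rightarrow> nat \<Rightarrow> (nat \<Rightarrow> nat) \<Rightarrow> (nat \<Rightarrow> real) \<Rightarrow> nat \<Rightarrow> real" where
  "lin_of_perm k nn mm \<sigma> x =
     vsum (\<lambda>c. vsmul (x c) (zeta k nn mm (\<sigma> c))) (coords k nn mm)"

text \<open>components represented by their minimal elements\<close>
definition comp_mins :: "kind \<Rightarrow> nat \<Rightarrow> nat \<Rightarrow> nat set \<Rightarrow> nat set" where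
  "comp_mins k nn mm S = {a \<in> S. a = Min (comp k nn mm S a)}"

definition w_l :: "kind \<Rightarrow> nat \<Rightarrow> nat \<Rightarrow> nat set \<Rightarrow> (nat \<Rightarrow> real) \<Rightarrow> nat \<Rightarrow> real" where
  "w_l k nn mm S =
     foldr (\<lambda>a f. lin_of_perm k nn mm (wperm k nn mm (comp k nn mm S a)) \<circ> f)
       (sorted_list_of_set (comp_mins k nn mm S)) id"

definition n_changes :: "bool list \<Rightarrow> nat" where
  "n_changes ps = card {i. Suc i < length ps \<and> ps ! i \<noteq> ps ! Suc i}"

definition par_seq :: "kind \<Rightarrow> nat \<Rightarrow> nat \<Rightarrow> nat set \<Rightarrow> bool list" where
  "par_seq k nn mm Cp = map (odd_idx k nn mm) (jlist k nn mm Cp)"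

text \<open>Pi_l admissible: for every component the induced grading is symmetric, and for a
  type A component (where hat l_i = gl(p|q)) the number of odd simple roots of hat l_i,
  i.e. of parity changes along v_(j_1),...,v_(j_r), is minimal among all symmetric
  gradings of gl(p|q).\<close>
definition admissible :: "kind \<Rightarrow> nat \<Rightarrow> nat \<Rightarrow> nat set \<Rightarrow> bool" where
  "admissible k nn mm S =
     (S \<subseteq> sr_idx k nn mm \<and>
      (\<forall>a\<in>S. let ps = par_seq k nn mm (comp k nn mm S a) in
         rev ps = ps \<and>
         (\<not> osp_comp k nn mm (comp k nn mm S a) \<longrightarrow>
            (\<forall>qs. length qs = length ps \<and> count_list qs True = count_list ps True \<and> rev qs = qs
                   \<longrightarrow> n_changes ps \<le> n_changes qs))))"

definition dynkin_aut :: "kind \<Rightarrow> nat \<Rightarrow> nat \<Rightarrow> (nat \<Rightarrow> nat) \<Rightarrow> bool" where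
  "dynkin_aut k nn mm \<tau> =
     (bij_betw \<tau> (sr_idx k nn mm) (sr_idx k nn mm) \<and>
      (\<forall>a\<in>sr_idx k nn mm. \<forall>b\<in>sr_idx k nn mm.
         form k nn mm (simple k nn mm (\<tau> a)) (simple k nn mm (\<tau> b))
           = form k nn mm (simple k nn mm a) (simple k nn mm b)))"

definition even_perm :: "kind \<Rightarrow> nat \<Rightarrow> nat \<Rightarrow> (nat \<Rightarrow> nat) \<Rightarrow> bool" where
  "even_perm k nn mm \<tau> = (\<forall>a\<in>sr_idx k nn mm. sr_odd k nn mm (\<tau> a) = sr_odd k nn mm a)"

definition valid_params :: "kind \<Rightarrow> nat \<Rightarrow> nat \<Rightarrow> bool" where
  "valid_params k nn mm = (case k of GL \<Rightarrow> 1 \<le> nn | B \<Rightarrow> 1 \<le> nn | C \<Rightarrow> 1 \<le> nn | D \<Rightarrow> 2 \<le> nn)"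

end

theory Submission
  imports Defs
begin

text \<open>
  The operator \<open>W = w_l\<close> is a product of commuting involutive isometries, one for each
  component of \<open>\<Pi>_l\<close>; each moves vectors only within the span of its component and fixes the
  orthogonal complement of that span. Hence \<open>W\<close> is an involutive isometry with
  \<open>W x - x \<in> span \<Pi>_l\<close> that fixes every vector orthogonal to \<open>\<Pi>_l\<close>.

  Since the simple roots are linearly independent, \<open>\<tau> = -W\<close> on \<open>\<Pi>_l\<close> forces \<open>\<tau> \<Pi>_l = \<Pi>_l\<close>,
  and \<open>\<tau>\<close> commutes with \<open>W\<close> on \<open>span \<Pi>_l\<close>. For a general \<open>x\<close> the commutator
  \<open>E = \<tau> W x - W \<tau> x\<close> lies in \<open>span \<Pi>_l\<close> and, \<open>\<tau>\<close> and \<open>W\<close> being isometries, is orthogonal to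
  \<open>\<Pi>_l\<close>; so \<open>W E = E\<close>. Replacing \<open>x\<close> by \<open>W x \<in> x + span \<Pi>_l\<close> leaves \<open>E\<close> unchanged but turns it
  into \<open>-W E\<close>, hence \<open>E = 0\<close>. (The form may be degenerate on \<open>span \<Pi>_l\<close>, so orthogonality
  alone would not suffice.)
\<close>

lemma vadd_apply: "vadd x y c = x c + y c" by (simp add: vadd_def)
lemma vsmul_apply: "vsmul r x c = r * x c" by (simp add: vsmul_def)
lemma vneg_apply: "vneg x c = - x c" by (simp add: vneg_def)
lemma vzero_apply: "vzero c = 0" by (simp add: vzero_def)
lemma vsum_apply: "vsum f I c = (\<Sum>i\<in>I. f i c)" by (simp add: vsum_def)
lemma unitv_apply: "unitv i c = (if c = i then 1 else 0)" by (simp add: unitv_def)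

definition vdiff :: "(nat \<Rightarrow> real) \<Rightarrow> (nat \<Rightarrow> real) \<Rightarrow> nat \<Rightarrow> real" where
  "vdiff x y = vadd x (vneg y)"

lemma vdiff_apply: "vdiff x y c = x c - y c"
  by (simp add: vdiff_def vadd_apply vneg_apply)

lemmas vec_apply = vadd_apply vsmul_apply vneg_apply vzero_apply vsum_apply vdiff_apply

lemma vsum_cong: "(\<And>i. i \<in> I \<Longrightarrow> f i = g i) \<Longrightarrow> vsum f I = vsum g I"
  by (simp add: vsum_def)

lemma vneg_eq_vsmul: "vneg x = vsmul (-1) x" by (rule ext) (simp add: vec_apply)

lemma vneg_vneg: "vneg (vneg x) = x" by (rule ext) (simp add: vec_apply)

lemma vadd_vdiff_cancel: "vadd x (vdiff y x) = y" by (rule ext) (simp add: vec_apply)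

lemma vneg_self_eq_zero: "vneg x = x \<Longrightarrow> x = vzero"
  by (auto simp: fun_eq_iff vec_apply dest: fun_cong)

definition vspan :: "('i \<Rightarrow> nat \<Rightarrow> real) \<Rightarrow> 'i set \<Rightarrow> (nat \<Rightarrow> real) set" where
  "vspan v Y = {vsum (\<lambda>b. vsmul (f b) (v b)) Y | f. True}"

lemma vspanI: "x = vsum (\<lambda>b. vsmul (f b) (v b)) Y \<Longrightarrow> x \<in> vspan v Y"
  unfolding vspan_def by blast

lemma vspanE:
  assumes "x \<in> vspan v Y"
  obtains f where "x = vsum (\<lambda>b. vsmul (f b) (v b)) Y"
  using assms unfolding vspan_def by blast

lemma vspan_zero: "vzero \<in> vspan v Y"
  by (rule vspanI[where f = "\<lambda>_. 0"]) (rule ext, simp add: vec_apply)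

lemma vspan_add:
  assumes "x \<in> vspan v Y" "y \<in> vspan v Y"
  shows "vadd x y \<in> vspan v Y"
proof -
  obtain f where "x = vsum (\<lambda>b. vsmul (f b) (v b)) Y"
    using assms(1) by (rule vspanE)
  moreover obtain g where "y = vsum (\<lambda>b. vsmul (g b) (v b)) Y"
    using assms(2) by (rule vspanE)
  ultimately show ?thesis
    by (intro vspanI[where f = "\<lambda>b. f b + g b"]) (auto simp: fun_eq_iff vec_apply algebra_simps sum.distrib)
qed

lemma vspan_smul:
  assumes "x \<in> vspan v Y"
  shows "vsmul r x \<in> vspan v Y"
proof -
  obtain f where "x = vsum (\<lambda>b. vsmul (f b) (v b)) Y"
    using assms by (rule vspanE)
  then show ?thesis
    by (intro vspanI[where f = "\<lambda>b. r * f b"]) (auto simp: fun_eq_iff vec_apply algebra_simps sum_distrib_left)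
qed

lemma vspan_neg: "x \<in> vspan v Y \<Longrightarrow> vneg x \<in> vspan v Y"
  by (metis vneg_eq_vsmul vspan_smul)

lemma vspan_diff: "x \<in> vspan v Y \<Longrightarrow> y \<in> vspan v Y \<Longrightarrow> vdiff x y \<in> vspan v Y"
  unfolding vdiff_def by (metis vspan_add vspan_neg)

lemma vspan_base:
  assumes "finite Y" "b \<in> Y"
  shows "v b \<in> vspan v Y"
proof (rule vspanI[where f = "\<lambda>c. of_bool (c = b)"], rule ext)
  fix x
  have "(\<Sum>c\<in>Y. of_bool (c = b) * v c x) = (\<Sum>c\<in>Y. if c = b then v c x else 0)"
    by (rule sum.cong) auto
  also have "\<dots> = v b x" using assms by (simp add: sum.delta)
  finally show "v b x = vsum (\<lambda>c. vsmul (of_bool (c = b)) (v c)) Y x" by (simp add: vec_apply)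
qed

lemma vspan_mono:
  assumes "finite Y'" "Y \<subseteq> Y'" "x \<in> vspan v Y"
  shows "x \<in> vspan v Y'"
proof -
  obtain f where f: "x = vsum (\<lambda>b. vsmul (f b) (v b)) Y"
    using assms(3) by (rule vspanE)
  show ?thesis
  proof (rule vspanI[where f = "\<lambda>b. if b \<in> Y then f b else 0"], rule ext)
    fix c
    have "(\<Sum>b\<in>Y'. (if b \<in> Y then f b else 0) * v b c) = (\<Sum>b\<in>Y'. if b \<in> Y then f b * v b c else 0)"
      by (rule sum.cong) auto
    also have "\<dots> = (\<Sum>b\<in>Y' \<inter> Y. f b * v b c)" using assms(1) by (simp add: sum.inter_restrict)
    also have "Y' \<inter> Y = Y" using assms(2) by blast
    finally show "x c = vsum (\<lambda>b. vsmul (if b \<in> Y then f b else 0) (v b)) Y' c"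
      using f by (simp add: vec_apply)
  qed
qed

lemma vspan_vsum:
  assumes "finite I" "\<And>i. i \<in> I \<Longrightarrow> g i \<in> vspan v Y"
  shows "vsum g I \<in> vspan v Y"
  using assms
proof (induction I rule: finite_induct)
  case empty
  have "vsum g {} = vzero" by (rule ext) (simp add: vec_apply)
  then show ?case by (metis vspan_zero)
next
  case (insert a I)
  have "vsum g (insert a I) = vadd (g a) (vsum g I)"
    using insert by (auto simp: fun_eq_iff vec_apply)
  then show ?case using insert by (metis vspan_add insertCI)
qed

definition vlinear :: "((nat \<Rightarrow> real) \<Rightarrow> nat \<Rightarrow> real) \<Rightarrow> bool" where
  "vlinear M \<longleftrightarrow> (\<forall>x y. M (vadd x y) = vadd (M x) (M y)) \<and> (\<forall>r x. M (vsmul r x) = vsmul r (M x))"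

lemma vlinear_add: "vlinear M \<Longrightarrow> M (vadd x y) = vadd (M x) (M y)"
  by (simp add: vlinear_def)

lemma vlinear_smul: "vlinear M \<Longrightarrow> M (vsmul r x) = vsmul r (M x)"
  by (simp add: vlinear_def)

lemma vlinear_zero:
  assumes "vlinear M"
  shows "M vzero = vzero"
proof -
  have "vzero = vsmul 0 vzero" by (rule ext) (simp add: vec_apply)
  then have "M vzero = vsmul 0 (M vzero)" using vlinear_smul[OF assms] by metis
  then show ?thesis by (auto simp: fun_eq_iff vec_apply)
qed

lemma vlinear_neg: "vlinear M \<Longrightarrow> M (vneg x) = vneg (M x)"
  by (metis vneg_eq_vsmul vlinear_smul)

lemma vlinear_diff: "vlinear M \<Longrightarrow> M (vdiff x y) = vdiff (M x) (M y)"
  unfolding vdiff_def by (metis vlinear_add vlinear_neg)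

lemma vlinear_vsum:
  assumes "vlinear M"
  shows "M (vsum g I) = vsum (\<lambda>i. M (g i)) I"
proof (cases "finite I")
  case True
  then show ?thesis
  proof (induction I rule: finite_induct)
    case empty
    have "vsum g {} = vzero" "vsum (\<lambda>i. M (g i)) {} = vzero" by (rule ext, simp add: vec_apply)+
    then show ?case using vlinear_zero[OF assms] by metis
  next
    case (insert a I)
    have "vsum g (insert a I) = vadd (g a) (vsum g I)"
      "vsum (\<lambda>i. M (g i)) (insert a I) = vadd (M (g a)) (vsum (\<lambda>i. M (g i)) I)"
      using insert by (auto simp: fun_eq_iff vec_apply)
    then show ?case using insert vlinear_add[OF assms] by simp
  qed
next
  case False
  then have "vsum g I = vzero" "vsum (\<lambda>i. M (g i)) I = vzero" by (auto simp: fun_eq_iff vec_apply)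
  then show ?thesis using vlinear_zero[OF assms] by metis
qed

lemma vlinear_lincomb:
  "vlinear M \<Longrightarrow> M (vsum (\<lambda>b. vsmul (f b) (v b)) Y) = vsum (\<lambda>b. vsmul (f b) (M (v b))) Y"
  by (simp add: vlinear_vsum vlinear_smul)

lemma vlinear_vspan:
  assumes "vlinear M" "finite Y" "x \<in> vspan v Y" "\<And>b. b \<in> Y \<Longrightarrow> M (v b) \<in> vspan u Y'"
  shows "M x \<in> vspan u Y'"
proof -
  obtain f where "x = vsum (\<lambda>b. vsmul (f b) (v b)) Y"
    using assms(3) by (rule vspanE)
  then have "M x = vsum (\<lambda>b. vsmul (f b) (M (v b))) Y"
    using vlinear_lincomb[OF assms(1)] by simp
  also have "\<dots> \<in> vspan u Y'" using assms(2,4) by (intro vspan_vsum vspan_smul) auto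
  finally show ?thesis .
qed

lemma vlinear_eq_on_vspan:
  assumes "vlinear M" "vlinear M'" "x \<in> vspan v Y" "\<And>b. b \<in> Y \<Longrightarrow> M (v b) = M' (v b)"
  shows "M x = M' x"
proof -
  obtain f where "x = vsum (\<lambda>b. vsmul (f b) (v b)) Y"
    using assms(3) by (rule vspanE)
  then show ?thesis
    using assms(4) by (simp only: vlinear_lincomb[OF assms(1)] vlinear_lincomb[OF assms(2)])
      (rule vsum_cong, simp)
qed

lemma vlinear_comp: "vlinear M \<Longrightarrow> vlinear M' \<Longrightarrow> vlinear (M \<circ> M')"
  by (simp add: vlinear_def)

lemma vlinear_id: "vlinear id"
  by (simp add: vlinear_def)

definition coord_sign :: "kind \<Rightarrow> nat \<Rightarrow> nat \<Rightarrow> nat \<Rightarrow> real" where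
  "coord_sign k nn mm c = (if odd_idx k nn mm c then -1 else 1)"

lemma form_eq_signed_sum:
  "form k nn mm x y = (\<Sum>c\<in>coords k nn mm. coord_sign k nn mm c * x c * y c)"
  by (simp add: form_def coord_sign_def)

lemma form_sym: "form k nn mm x y = form k nn mm y x"
  by (simp add: form_eq_signed_sum mult_ac)

lemma form_smul_left: "form k nn mm (vsmul r x) z = r * form k nn mm x z"
  by (simp add: form_eq_signed_sum vec_apply algebra_simps sum_distrib_left)

lemma form_smul_right: "form k nn mm z (vsmul r x) = r * form k nn mm z x"
  by (simp add: form_eq_signed_sum vec_apply algebra_simps sum_distrib_left)

lemma form_neg_left: "form k nn mm (vneg x) z = - form k nn mm x z"
  by (simp add: vneg_eq_vsmul form_smul_left)

lemma form_neg_right: "form k nn mm z (vneg x) = - form k nn mm z x"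
  by (simp add: vneg_eq_vsmul form_smul_right)

lemma form_diff_left: "form k nn mm (vdiff x y) z = form k nn mm x z - form k nn mm y z"
  by (simp add: form_eq_signed_sum vec_apply algebra_simps sum_subtractf)

lemma form_diff_right: "form k nn mm z (vdiff x y) = form k nn mm z x - form k nn mm z y"
  by (simp add: form_eq_signed_sum vec_apply algebra_simps sum_subtractf)

lemma form_zero_left: "form k nn mm vzero z = 0"
  by (simp add: form_eq_signed_sum vec_apply)

lemma form_zero_right: "form k nn mm z vzero = 0"
  by (simp add: form_eq_signed_sum vec_apply)

lemma form_vsum_left: "form k nn mm (vsum g I) z = (\<Sum>i\<in>I. form k nn mm (g i) z)"
  by (simp add: form_eq_signed_sum vec_apply sum_distrib_left sum_distrib_right sum.swap[of _ I] mult_ac)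

lemma form_vsum_right: "form k nn mm z (vsum g I) = (\<Sum>i\<in>I. form k nn mm z (g i))"
  by (simp add: form_eq_signed_sum vec_apply sum_distrib_left sum_distrib_right sum.swap[of _ I] mult_ac)

lemma form_lincomb:
  "form k nn mm (vsum (\<lambda>c. vsmul (x c) (u c)) X) (vsum (\<lambda>d. vsmul (y d) (v d)) Y)
     = (\<Sum>c\<in>X. \<Sum>d\<in>Y. x c * (y d * form k nn mm (u c) (v d)))"
proof -
  have "form k nn mm (vsum (\<lambda>c. vsmul (x c) (u c)) X) (vsum (\<lambda>d. vsmul (y d) (v d)) Y)
     = (\<Sum>c\<in>X. x c * form k nn mm (u c) (vsum (\<lambda>d. vsmul (y d) (v d)) Y))"
    by (subst form_vsum_left) (simp only: form_smul_left)
  also have "\<dots> = (\<Sum>c\<in>X. \<Sum>d\<in>Y. x c * (y d * form k nn mm (u c) (v d)))"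
    by (simp only: form_vsum_right form_smul_right sum_distrib_left)
  finally show ?thesis .
qed

lemma form_vspan_left_eq_0:
  assumes "x \<in> vspan v Y" "\<And>b. b \<in> Y \<Longrightarrow> form k nn mm (v b) z = 0"
  shows "form k nn mm x z = 0"
proof -
  obtain f where "x = vsum (\<lambda>b. vsmul (f b) (v b)) Y"
    using assms(1) by (rule vspanE)
  then show ?thesis
    using assms(2) by (simp add: form_vsum_left form_smul_left)
qed

lemma card_less_sorted_nth: fixes js :: "nat list"
  assumes s: "sorted_wrt (<) js" and i: "i < length js"
  shows "card {x \<in> set js. x < js ! i} = i"
proof -
  have d: "distinct js" using s strict_sorted_iff by blast
  have "{x \<in> set js. x < js ! i} = set (take i js)"
  proof (rule set_eqI, rule iffI)
    fix x assume "x \<in> {x \<in> set js. x < js ! i}"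
    then obtain m where m: "m < length js" "x = js ! m" "js ! m < js ! i"
      by (auto simp: in_set_conv_nth)
    have "m < i"
    proof (rule ccontr)
      assume "\<not> m < i"
      hence "m = i \<or> i < m" by auto
      thus False using m sorted_wrt_nth_less[OF s, of i m] by auto
    qed
    thus "x \<in> set (take i js)" using m by (auto simp: in_set_conv_nth)
  next
    fix x assume "x \<in> set (take i js)"
    then obtain m where m: "m < i" "x = js ! m" using i by (auto simp: in_set_conv_nth)
    show "x \<in> {x \<in> set js. x < js ! i}"
      using m i sorted_wrt_nth_less[OF s, of m i] by auto
  qed
  moreover have "card (set (take i js)) = i" using d i by (simp add: distinct_card)
  ultimately show ?thesis by simp
qed

definition mirror :: "nat set \<Rightarrow> nat \<Rightarrow> nat" where
  "mirror J j = (let js = sorted_list_of_set J in js ! (length js - 1 - card {x\<in>J. x < j}))"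

lemma mirror_mem_invol: assumes f: "finite J" and j: "j \<in> J"
  shows "mirror J j \<in> J \<and> mirror J (mirror J j) = j"
proof -
  let ?js = "sorted_list_of_set J"
  have s: "sorted_wrt (<) ?js" by (simp add: strict_sorted_list_of_set)
  have sj: "set ?js = J" using f by simp
  obtain i where i: "i < length ?js" "?js ! i = j" using j sj by (metis in_set_conv_nth)
  have ri: "card {x\<in>J. x < j} = i" using card_less_sorted_nth[OF s i(1)] i sj by simp
  have r1: "mirror J j = ?js ! (length ?js - 1 - i)" unfolding mirror_def Let_def ri ..
  have l: "length ?js - 1 - i < length ?js" using i by auto
  have in1: "mirror J j \<in> J" using r1 l sj nth_mem by metis
  have "card {x\<in>J. x < mirror J j} = length ?js - 1 - i" using card_less_sorted_nth[OF s l] r1 sj by simp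
  hence "mirror J (mirror J j) = ?js ! (length ?js - 1 - (length ?js - 1 - i))" unfolding mirror_def Let_def by simp
  also have "\<dots> = j" using i by (simp add: Suc_diff_le)
  finally show ?thesis using in1 by simp
qed

lemma mirror_palindrome: assumes f: "finite J" and j: "j \<in> J"
  and r: "rev (map g (sorted_list_of_set J)) = map g (sorted_list_of_set J)"
  shows "g (mirror J j) = g j"
proof -
  let ?js = "sorted_list_of_set J"
  have s: "sorted_wrt (<) ?js" by (simp add: strict_sorted_list_of_set)
  have sj: "set ?js = J" using f by simp
  obtain i where i: "i < length ?js" "?js ! i = j" using j sj by (metis in_set_conv_nth)
  have ri: "card {x\<in>J. x < j} = i" using card_less_sorted_nth[OF s i(1)] i sj by simp
  have r1: "mirror J j = ?js ! (length ?js - 1 - i)" unfolding mirror_def Let_def ri ..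
  have "rev (map g ?js) ! i = map g ?js ! i" using r by simp
  hence "g (?js ! (length ?js - Suc i)) = g (?js ! i)" using i by (simp add: rev_nth)
  thus ?thesis using r1 i by simp
qed

lemma mirror_interval: assumes "lo \<le> j" "j \<le> hi" shows "mirror {lo..hi} j = lo + hi - j"
proof -
  have e: "sorted_list_of_set {lo..hi} = [lo..<Suc hi]"
    by (metis atLeastLessThanSuc_atLeastAtMost sorted_list_of_set_range)
  have c: "card {x \<in> {lo..hi}. x < j} = j - lo"
  proof -
    have "{x \<in> {lo..hi}. x < j} = {lo..<j}" using assms by auto
    thus ?thesis by simp
  qed
  have "mirror {lo..hi} j = [lo..<Suc hi] ! (hi - j)"
    unfolding mirror_def Let_def e c using assms by (simp add: algebra_simps)
  also have "\<dots> = lo + hi - j" using assms by (subst nth_upt) auto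
  finally show ?thesis .
qed

locale super_setting =
  fixes k :: kind and nn mm :: nat
  assumes vp: "valid_params k nn mm"
begin

abbreviation "dimV \<equiv> tot k nn mm"
abbreviation "tail \<equiv> mm + nn"
abbreviation "\<zeta> \<equiv> zeta k nn mm"
abbreviation "\<alpha> \<equiv> simple k nn mm"
abbreviation form_bracket :: "(nat \<Rightarrow> real) \<Rightarrow> (nat \<Rightarrow> real) \<Rightarrow> real" ("\<langle>_, _\<rangle>")
  where "\<langle>x, y\<rangle> \<equiv> form k nn mm x y"
abbreviation "Crd \<equiv> coords k nn mm"
abbreviation "Nodes \<equiv> sr_idx k nn mm"
abbreviation "dual \<equiv> prim k nn mm"
abbreviation "odd_at \<equiv> odd_idx k nn mm"
abbreviation "sgn_at \<equiv> coord_sign k nn mm"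
abbreviation "rspan X \<equiv> vspan \<alpha> X"

lemma nn_ge_1: "1 \<le> nn" using vp by (cases k) (auto simp: valid_params_def)

lemma nn_ge_2_D: "k = D \<Longrightarrow> 2 \<le> nn"
  using vp by (auto simp: valid_params_def)

lemma Crd_osp: "k \<noteq> GL \<Longrightarrow> Crd = {1..tail}"
  by (simp add: coords_def rk_def)

lemma dimV_osp_bounds: "k \<noteq> GL \<Longrightarrow> 2*tail \<le> dimV \<and> dimV \<le> 2*tail+1"
  by (cases k) (auto simp: tot_def dimN_def)

lemma dimV_osp: "k = D \<Longrightarrow> dimV = 2*tail" "k = C \<Longrightarrow> dimV = 2*tail" "k = B \<Longrightarrow> dimV = 2*tail+1"
  by (auto simp: tot_def dimN_def)

lemma Crd_GL: "k = GL \<Longrightarrow> Crd = {1..dimV}" by (simp add: coords_def rk_def)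

lemma Nodes_GL: "k = GL \<Longrightarrow> Nodes = {1..dimV - 1}"
  by (simp add: sr_idx_def nsr_def)

lemma Nodes_osp: "k \<noteq> GL \<Longrightarrow> Nodes = {1..tail}"
  by (simp add: sr_idx_def nsr_def)

lemma Crd_subset: "Crd \<subseteq> {1..dimV}"
  by (cases k) (auto simp: coords_def rk_def tot_def dimN_def)

lemma Nodes_bounds: "b \<in> Nodes \<Longrightarrow> 1 \<le> b \<and> Suc b \<le> dimV"
  using nn_ge_1 by (cases k) (auto simp: sr_idx_def nsr_def tot_def dimN_def)

lemma dual_eq: "dual j = dimV + 1 - j" by (simp add: prim_def)

lemma dual_dual: "j \<in> {1..dimV} \<Longrightarrow> dual (dual j) = j"
  by (auto simp: dual_eq)

lemma dual_range: "j \<in> {1..dimV} \<Longrightarrow> dual j \<in> {1..dimV}"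
  by (auto simp: dual_eq)

lemma odd_at_dual: "j \<in> {1..dimV} \<Longrightarrow> odd_at (dual j) = odd_at j"
  by (auto simp: dual_eq odd_idx_def tot_def)

lemma sgn_at_dual: "j \<in> {1..dimV} \<Longrightarrow> sgn_at (dual j) = sgn_at j"
  using odd_at_dual by (simp add: coord_sign_def)

lemma dual_inj: "i \<in> {1..dimV} \<Longrightarrow> j \<in> {1..dimV} \<Longrightarrow> dual i = dual j \<Longrightarrow> i = j"
  by (metis dual_dual)

definition in_h :: "(nat \<Rightarrow> real) \<Rightarrow> bool" where
  "in_h x \<longleftrightarrow> (\<forall>c. c \<notin> Crd \<longrightarrow> x c = 0)"

lemma zeta_osp: "k \<noteq> GL \<Longrightarrow> \<zeta> j = (if j \<le> tail then unitv j else if dual j \<le> tail then vneg (unitv (dual j)) else vzero)"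
  by (simp add: zeta_def)

lemma zeta_GL: "k = GL \<Longrightarrow> \<zeta> j = unitv j"
  by (simp add: zeta_def)

lemma zeta_Crd: "c \<in> Crd \<Longrightarrow> \<zeta> c = unitv c"
  by (auto simp: zeta_def coords_def rk_def)

lemma zeta_dual: assumes "k \<noteq> GL" "j \<in> {1..dimV}" shows "\<zeta> (dual j) = vneg (\<zeta> j)"
proof -
  have pp: "dual (dual j) = j" using assms dual_dual by blast
  have n: "2*tail \<le> dimV" using dimV_osp_bounds assms by blast
  show ?thesis
  proof (cases "j \<le> tail")
    case True
    hence "\<not> dual j \<le> tail" using assms n by (auto simp: dual_eq)
    then show ?thesis using True pp assms by (simp add: zeta_osp)
  next
    case False
    then show ?thesis using pp assms
      by (auto simp: zeta_osp fun_eq_iff vec_apply)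
  qed
qed

lemma in_h_unitv: "c \<in> Crd \<Longrightarrow> in_h (unitv c)"
  by (auto simp: in_h_def unitv_apply)

lemma in_h_zeta: assumes "j \<in> {1..dimV}" shows "in_h (\<zeta> j)"
proof (cases "k = GL")
  case True show ?thesis using assms in_h_unitv by (auto simp: zeta_GL[OF True] Crd_GL[OF True])
next
  case False
  then show ?thesis using assms
    by (auto simp: zeta_osp in_h_def unitv_apply Crd_osp vec_apply dual_eq)
qed

lemma form_unitv: "\<langle>unitv a, unitv b\<rangle> = (if a = b \<and> a \<in> Crd then sgn_at a else 0)"
proof -
  have "\<langle>unitv a, unitv b\<rangle> = (\<Sum>c\<in>Crd. if c = a \<and> a = b then sgn_at a else 0)"
    unfolding form_eq_signed_sum by (rule sum.cong) (auto simp: unitv_apply)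
  also have "\<dots> = (if a = b \<and> a \<in> Crd then sgn_at a else 0)"
    by (cases "a = b") (auto simp: sum.delta' coords_def)
  finally show ?thesis .
qed

lemma form_zeta:
  assumes "i \<in> {1..dimV}" "j \<in> {1..dimV}"
  shows "\<langle>\<zeta> i, \<zeta> j\<rangle> = (if i = j then sgn_at i else 0) - (if k \<noteq> GL \<and> i = dual j then sgn_at i else 0)"
proof (cases "k = GL")
  case True
  have "\<zeta> i = unitv i" "\<zeta> j = unitv j" using zeta_GL[OF True] by blast+
  then show ?thesis using assms Crd_GL[OF True] by (simp only: form_unitv) (auto simp: True)
next
  case False
  have "2*tail \<le> dimV" "dimV \<le> 2*tail+1" using dimV_osp_bounds False by auto
  moreover have "sgn_at (dual i) = sgn_at i" "sgn_at (dual j) = sgn_at j" using sgn_at_dual assms by auto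
  ultimately show ?thesis using False assms
    by (auto simp: zeta_osp form_unitv Crd_osp form_neg_left form_neg_right form_zero_left form_zero_right
        dual_eq split: if_splits)
qed

lemma in_h_expansion: assumes "in_h x" shows "x = vsum (\<lambda>c. vsmul (x c) (\<zeta> c)) Crd"
proof (rule ext)
  fix d
  have "vsum (\<lambda>c. vsmul (x c) (\<zeta> c)) Crd d = (\<Sum>c\<in>Crd. if c = d then x c else 0)"
    by (auto simp: vec_apply zeta_Crd unitv_apply intro!: sum.cong)
  also have "\<dots> = x d" using assms by (auto simp: sum.delta' coords_def in_h_def)
  finally show "x d = vsum (\<lambda>c. vsmul (x c) (\<zeta> c)) Crd d" ..
qed

lemma in_h_add: "in_h x \<Longrightarrow> in_h y \<Longrightarrow> in_h (vadd x y)"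
  by (simp add: in_h_def vec_apply)

lemma in_h_smul: "in_h x \<Longrightarrow> in_h (vsmul r x)"
  by (simp add: in_h_def vec_apply)

lemma in_h_diff: "in_h x \<Longrightarrow> in_h y \<Longrightarrow> in_h (vdiff x y)"
  by (simp add: in_h_def vec_apply)

lemma in_h_vsum: "(\<And>i. i \<in> X \<Longrightarrow> in_h (g i)) \<Longrightarrow> in_h (vsum g X)"
  by (simp add: in_h_def vec_apply)

lemma form_nondegenerate: assumes "in_h z" "\<And>j. j \<in> Crd \<Longrightarrow> \<langle>z, \<zeta> j\<rangle> = 0" shows "z = vzero"
proof (rule ext)
  fix d
  show "z d = vzero d"
  proof (cases "d \<in> Crd")
    case True
    have "\<langle>z, \<zeta> d\<rangle> = (\<Sum>c\<in>Crd. if c = d then sgn_at d * z d else 0)"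
      unfolding form_eq_signed_sum zeta_Crd[OF True] by (rule sum.cong) (auto simp: unitv_apply)
    also have "\<dots> = sgn_at d * z d" using True by (simp add: sum.delta' coords_def)
    finally have "sgn_at d * z d = 0" using assms(2) True by simp
    then show ?thesis by (simp add: coord_sign_def vec_apply split: if_splits)
  next
    case False then show ?thesis using assms(1) by (simp add: in_h_def vec_apply)
  qed
qed

lemma simple_nontail: assumes "b \<in> Nodes" "\<not> (k \<noteq> GL \<and> b = tail)"
  shows "\<alpha> b = vdiff (\<zeta> b) (\<zeta> (Suc b)) \<and> b \<in> Crd \<and> Suc b \<in> Crd"
proof -
  have "b \<in> Crd \<and> Suc b \<in> Crd"
  proof (cases "k = GL")
    case True show ?thesis using assms by (auto simp: Nodes_GL[OF True] Crd_GL[OF True])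
  next
    case False show ?thesis using assms False by (auto simp: Nodes_osp[OF False] Crd_osp[OF False])
  qed
  moreover have "\<alpha> b = vadd (\<zeta> b) (vneg (\<zeta> (Suc b)))" using assms unfolding simple_def by auto
  ultimately show ?thesis by (simp add: vdiff_def)
qed

lemma simple_B: "k = B \<Longrightarrow> \<alpha> tail = \<zeta> tail"
  by (simp add: simple_def)

lemma simple_C: "k = C \<Longrightarrow> \<alpha> tail = vsmul 2 (\<zeta> tail)"
  by (simp add: simple_def)

lemma simple_D: "k = D \<Longrightarrow> \<alpha> tail = vadd (\<zeta> (tail - 1)) (\<zeta> tail)"
  by (simp add: simple_def)

lemma in_h_simple: assumes "b \<in> Nodes" shows "in_h (\<alpha> b)"
proof (cases "k \<noteq> GL \<and> b = tail")
  case True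
  have r: "tail \<in> {1..dimV}" "tail - 1 \<in> {1..dimV}" if "k = D"
    using dimV_osp(1)[OF that] nn_ge_2_D[OF that] by auto
  have r2: "tail \<in> {1..dimV}" using True dimV_osp_bounds[of] nn_ge_1 by auto
  show ?thesis
  proof (cases k)
    case GL then show ?thesis using True by simp
  next
    case B show ?thesis using True r2 by (simp add: simple_B[OF B] in_h_zeta)
  next
    case C show ?thesis using True r2 by (simp add: simple_C[OF C] in_h_zeta in_h_smul)
  next
    case D show ?thesis using True r[OF D] by (simp add: simple_D[OF D] in_h_zeta in_h_add)
  qed
next
  case False
  then show ?thesis using simple_nontail[OF assms False] Crd_subset by (auto intro!: in_h_diff in_h_zeta)
qed

lemma finite_Nodes: "finite Nodes"
  by (simp add: sr_idx_def)

lemma in_h_rspan: "x \<in> rspan Y \<Longrightarrow> Y \<subseteq> Nodes \<Longrightarrow> in_h x"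
  by (auto elim!: vspanE intro!: in_h_vsum in_h_smul in_h_simple)

section \<open>Operators induced by index involutions\<close>

text \<open>The index maps of the operators \<open>w_(l_i)\<close>; compatibility with \<open>dual\<close> is what makes
  \<open>\<zeta>_j \<mapsto> \<zeta>_(\<rho> j)\<close> well defined when \<open>\<zeta>_(j') = -\<zeta>_j\<close>.\<close>

definition parity_invol :: "(nat \<Rightarrow> nat) \<Rightarrow> bool" where
  "parity_invol \<rho> \<longleftrightarrow> (\<forall>j\<in>{1..dimV}. \<rho> j \<in> {1..dimV} \<and> \<rho> (\<rho> j) = j \<and> odd_at (\<rho> j) = odd_at j) \<and>
     (k \<noteq> GL \<longrightarrow> (\<forall>j\<in>{1..dimV}. \<rho> (dual j) = dual (\<rho> j)))"

lemma finite_Crd: "finite Crd" by (simp add: coords_def)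

abbreviation "perm_op \<equiv> lin_of_perm k nn mm"

lemma perm_op_apply: "perm_op \<rho> x = vsum (\<lambda>c. vsmul (x c) (\<zeta> (\<rho> c))) Crd"
  by (simp add: lin_of_perm_def)

lemma vlinear_perm_op: "vlinear (perm_op \<rho>)"
  unfolding vlinear_def
proof (intro conjI allI)
  fix x y show "perm_op \<rho> (vadd x y) = vadd (perm_op \<rho> x) (perm_op \<rho> y)"
    by (rule ext) (simp only: perm_op_apply vec_apply distrib_right sum.distrib)
next
  fix r x show "perm_op \<rho> (vsmul r x) = vsmul r (perm_op \<rho> x)"
    by (rule ext) (simp only: perm_op_apply vec_apply sum_distrib_left mult.assoc)
qed

lemma zeta_self_dual: assumes "j \<in> {1..dimV}" "dual j = j" "k \<noteq> GL" shows "\<zeta> j = vzero"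
  using zeta_dual[OF assms(3,1)] assms(2) vneg_self_eq_zero by metis

lemma perm_op_unitv: "c \<in> Crd \<Longrightarrow> perm_op \<rho> (unitv c) = \<zeta> (\<rho> c)"
proof (rule ext)
  fix d assume c: "c \<in> Crd"
  have "perm_op \<rho> (unitv c) d = (\<Sum>e\<in>Crd. if e = c then \<zeta> (\<rho> c) d else 0)"
    unfolding perm_op_apply vsum_apply by (rule sum.cong) (auto simp: vec_apply unitv_apply)
  also have "\<dots> = \<zeta> (\<rho> c) d" using c by (simp add: sum.delta' coords_def)
  finally show "perm_op \<rho> (unitv c) d = \<zeta> (\<rho> c) d" .
qed

lemma perm_op_zeta: assumes g: "parity_invol \<rho>" and j: "j \<in> {1..dimV}" shows "perm_op \<rho> (\<zeta> j) = \<zeta> (\<rho> j)"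
proof (cases "j \<in> Crd")
  case True then show ?thesis by (simp add: zeta_Crd perm_op_unitv)
next
  case False
  have osp: "k \<noteq> GL"
  proof
    assume "k = GL" thus False using False j Crd_GL[OF \<open>k = GL\<close>] by auto
  qed
  have n: "2*tail \<le> dimV" "dimV \<le> 2*tail+1" using dimV_osp_bounds osp by auto
  have jq: "\<not> j \<le> tail" using False j by (auto simp: Crd_osp[OF osp])
  have rj: "\<rho> j \<in> {1..dimV}" using g j by (auto simp: parity_invol_def)
  have prj: "dual j \<in> {1..dimV}" using dual_range j by blast
  have rpr: "\<rho> (dual j) = dual (\<rho> j)" using g osp j by (auto simp: parity_invol_def)
  show ?thesis
  proof (cases "dual j \<le> tail")
    case True
    have pjc: "dual j \<in> Crd" using True prj by (auto simp: Crd_osp[OF osp])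
    have "\<zeta> j = vneg (\<zeta> (dual j))" using zeta_dual[OF osp prj] dual_dual[OF j] by simp
    hence "perm_op \<rho> (\<zeta> j) = vneg (\<zeta> (\<rho> (dual j)))"
      using vlinear_neg[OF vlinear_perm_op] by (simp add: zeta_Crd[OF pjc] perm_op_unitv[OF pjc])
    also have "\<dots> = vneg (vneg (\<zeta> (\<rho> j)))" using rpr zeta_dual[OF osp rj] by simp
    also have "\<dots> = \<zeta> (\<rho> j)" by (rule ext) (simp add: vec_apply)
    finally show ?thesis .
  next
    case False
    have pjj: "dual j = j" using False jq n j by (auto simp: dual_eq)
    have "dual (\<rho> j) = \<rho> j" using rpr pjj by simp
    hence "\<zeta> (\<rho> j) = vzero" using zeta_self_dual rj osp by blast
    moreover have "\<zeta> j = vzero" using zeta_self_dual j pjj osp by blast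
    ultimately show ?thesis using vlinear_zero[OF vlinear_perm_op] by simp
  qed
qed

lemma parity_invol_range: "parity_invol \<rho> \<Longrightarrow> j \<in> {1..dimV} \<Longrightarrow> \<rho> j \<in> {1..dimV}"
  by (simp add: parity_invol_def)
lemma parity_invol_invol: "parity_invol \<rho> \<Longrightarrow> j \<in> {1..dimV} \<Longrightarrow> \<rho> (\<rho> j) = j"
  by (simp add: parity_invol_def)
lemma parity_invol_odd: "parity_invol \<rho> \<Longrightarrow> j \<in> {1..dimV} \<Longrightarrow> odd_at (\<rho> j) = odd_at j"
  by (simp add: parity_invol_def)
lemma parity_invol_dual: "parity_invol \<rho> \<Longrightarrow> k \<noteq> GL \<Longrightarrow> j \<in> {1..dimV} \<Longrightarrow> \<rho> (dual j) = dual (\<rho> j)"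
  by (simp add: parity_invol_def)

lemma in_h_perm_op: assumes "parity_invol \<rho>" shows "in_h (perm_op \<rho> x)"
  unfolding perm_op_apply using Crd_subset parity_invol_range[OF assms]
  by (intro in_h_vsum in_h_smul in_h_zeta) auto

lemma perm_op_involutive: assumes g: "parity_invol \<rho>" and x: "in_h x" shows "perm_op \<rho> (perm_op \<rho> x) = x"
proof -
  have "perm_op \<rho> (perm_op \<rho> x) = vsum (\<lambda>c. vsmul (x c) (perm_op \<rho> (\<zeta> (\<rho> c)))) Crd"
    unfolding perm_op_apply[of \<rho> x] vlinear_vsum[OF vlinear_perm_op] vlinear_smul[OF vlinear_perm_op] by (rule refl)
  also have "\<dots> = vsum (\<lambda>c. vsmul (x c) (\<zeta> c)) Crd"
  proof -
    have "\<And>c. c \<in> Crd \<Longrightarrow> perm_op \<rho> (\<zeta> (\<rho> c)) = \<zeta> c"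
      using perm_op_zeta[OF g] parity_invol_range[OF g] parity_invol_invol[OF g] Crd_subset by auto
    thus ?thesis by (simp add: vsum_def)
  qed
  also have "\<dots> = x" using in_h_expansion[OF x] by simp
  finally show ?thesis .
qed

lemma parity_invol_form_zeta: assumes g: "parity_invol \<rho>" and c: "c \<in> {1..dimV}" and d: "d \<in> {1..dimV}"
  shows "\<langle>\<zeta> (\<rho> c), \<zeta> (\<rho> d)\<rangle> = \<langle>\<zeta> c, \<zeta> d\<rangle>"
proof -
  have rc: "\<rho> c \<in> {1..dimV}" "\<rho> d \<in> {1..dimV}" using g c d parity_invol_range by auto
  have e1: "\<rho> c = \<rho> d \<longleftrightarrow> c = d" using parity_invol_invol[OF g] c d by metis
  have s: "sgn_at (\<rho> c) = sgn_at c" using parity_invol_odd[OF g c] by (simp add: coord_sign_def)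
  have e2: "k \<noteq> GL \<Longrightarrow> (\<rho> c = dual (\<rho> d) \<longleftrightarrow> c = dual d)"
    using parity_invol_dual[OF g _ d] parity_invol_invol[OF g] c dual_range[OF d] by metis
  have L: "\<langle>\<zeta> (\<rho> c), \<zeta> (\<rho> d)\<rangle> = (if \<rho> c = \<rho> d then sgn_at (\<rho> c) else 0) - (if k \<noteq> GL \<and> \<rho> c = dual (\<rho> d) then sgn_at (\<rho> c) else 0)"
    using form_zeta rc by blast
  have R: "\<langle>\<zeta> c, \<zeta> d\<rangle> = (if c = d then sgn_at c else 0) - (if k \<noteq> GL \<and> c = dual d then sgn_at c else 0)"
    using form_zeta c d by blast
  show ?thesis unfolding L R using e1 e2 s by auto
qed

lemma perm_op_isometry: assumes g: "parity_invol \<rho>" and x: "in_h x" and y: "in_h y"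
  shows "\<langle>perm_op \<rho> x, perm_op \<rho> y\<rangle> = \<langle>x, y\<rangle>"
proof -
  have "\<langle>perm_op \<rho> x, perm_op \<rho> y\<rangle> = (\<Sum>c\<in>Crd. \<Sum>d\<in>Crd. x c * (y d * \<langle>\<zeta> (\<rho> c), \<zeta> (\<rho> d)\<rangle>))"
    unfolding perm_op_apply form_lincomb ..
  also have "\<dots> = (\<Sum>c\<in>Crd. \<Sum>d\<in>Crd. x c * (y d * \<langle>\<zeta> c, \<zeta> d\<rangle>))"
  proof (intro sum.cong refl)
    fix c d assume "c \<in> Crd" "d \<in> Crd"
    hence "c \<in> {1..dimV}" "d \<in> {1..dimV}" using Crd_subset by auto
    thus "x c * (y d * \<langle>\<zeta> (\<rho> c), \<zeta> (\<rho> d)\<rangle>) = x c * (y d * \<langle>\<zeta> c, \<zeta> d\<rangle>)"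
      using parity_invol_form_zeta[OF g] by simp
  qed
  also have "\<dots> = \<langle>vsum (\<lambda>c. vsmul (x c) (\<zeta> c)) Crd, vsum (\<lambda>c. vsmul (y c) (\<zeta> c)) Crd\<rangle>"
    unfolding form_lincomb ..
  also have "\<dots> = \<langle>x, y\<rangle>" using in_h_expansion x y by simp
  finally show ?thesis .
qed

lemma perm_op_self_adjoint: assumes g: "parity_invol \<rho>" and x: "in_h x" and y: "in_h y"
  shows "\<langle>perm_op \<rho> x, y\<rangle> = \<langle>x, perm_op \<rho> y\<rangle>"
proof -
  have "\<langle>perm_op \<rho> x, y\<rangle> = \<langle>perm_op \<rho> x, perm_op \<rho> (perm_op \<rho> y)\<rangle>" using perm_op_involutive[OF g y] by simp
  also have "\<dots> = \<langle>x, perm_op \<rho> y\<rangle>" using perm_op_isometry[OF g x in_h_perm_op[OF g]] .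
  finally show ?thesis .
qed

lemma perm_op_diff_rspan: assumes g: "parity_invol \<rho>" and x: "in_h x" and fx: "finite X"
  and d: "\<And>j. j \<in> Crd \<Longrightarrow> vdiff (\<zeta> (\<rho> j)) (\<zeta> j) \<in> rspan X"
  shows "vdiff (perm_op \<rho> x) x \<in> rspan X"
proof -
  have "vdiff (perm_op \<rho> x) x = vsum (\<lambda>c. vsmul (x c) (vdiff (\<zeta> (\<rho> c)) (\<zeta> c))) Crd"
  proof (rule ext)
    fix e
    have xe: "x e = (\<Sum>c\<in>Crd. x c * \<zeta> c e)" using fun_cong[OF in_h_expansion[OF x], of e] by (simp add: vec_apply)
    show "vdiff (perm_op \<rho> x) x e = vsum (\<lambda>c. vsmul (x c) (vdiff (\<zeta> (\<rho> c)) (\<zeta> c))) Crd e"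
      unfolding perm_op_apply vdiff_apply xe by (simp add: vec_apply sum_subtractf right_diff_distrib)
  qed
  also have "\<dots> \<in> rspan X" using d finite_Crd by (intro vspan_vsum vspan_smul) auto
  finally show ?thesis .
qed

lemma perm_op_fixes_orth: assumes g: "parity_invol \<rho>" and x: "in_h x"
  and d: "\<And>j. j \<in> Crd \<Longrightarrow> vdiff (\<zeta> (\<rho> j)) (\<zeta> j) \<in> rspan X"
  and orth: "\<And>b. b \<in> X \<Longrightarrow> \<langle>x, \<alpha> b\<rangle> = 0"
  shows "perm_op \<rho> x = x"
proof -
  have "vdiff (perm_op \<rho> x) x = vzero"
  proof (rule form_nondegenerate)
    show "in_h (vdiff (perm_op \<rho> x) x)" using in_h_perm_op[OF g] x by (rule in_h_diff)
    fix j assume j: "j \<in> Crd"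
    have jn: "j \<in> {1..dimV}" using j Crd_subset by auto
    have "\<langle>vdiff (perm_op \<rho> x) x, \<zeta> j\<rangle> = \<langle>perm_op \<rho> x, \<zeta> j\<rangle> - \<langle>x, \<zeta> j\<rangle>" by (rule form_diff_left)
    also have "\<langle>perm_op \<rho> x, \<zeta> j\<rangle> = \<langle>x, \<zeta> (\<rho> j)\<rangle>"
      using perm_op_self_adjoint[OF g x in_h_zeta[OF jn]] perm_op_zeta[OF g jn] by simp
    also have "\<langle>x, \<zeta> (\<rho> j)\<rangle> - \<langle>x, \<zeta> j\<rangle> = \<langle>x, vdiff (\<zeta> (\<rho> j)) (\<zeta> j)\<rangle>" by (simp add: form_diff_right)
    also have "\<dots> = 0"
      using form_vspan_left_eq_0[OF d[OF j], where z = x and k = k and nn = nn and mm = mm] orth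
      by (simp add: form_sym)
    finally show "\<langle>vdiff (perm_op \<rho> x) x, \<zeta> j\<rangle> = 0" .
  qed
  thus ?thesis by (auto simp: fun_eq_iff vec_apply)
qed

section \<open>Products over mutually orthogonal blocks\<close>

abbreviation "w_of X \<equiv> wperm k nn mm X"

definition good_block :: "nat set \<Rightarrow> bool" where
  "good_block X \<longleftrightarrow> finite X \<and> parity_invol (w_of X) \<and> (\<forall>j\<in>Crd. vdiff (\<zeta> (w_of X j)) (\<zeta> j) \<in> rspan X)"

definition orth_blocks :: "nat set \<Rightarrow> nat set \<Rightarrow> bool" where
  "orth_blocks X Y \<longleftrightarrow> (\<forall>b\<in>X. \<forall>b'\<in>Y. \<langle>\<alpha> b, \<alpha> b'\<rangle> = 0)"

lemma perm_ops_commute: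
  assumes X: "good_block X" and Y: "good_block Y" and o: "orth_blocks X Y" and x: "in_h x"
  shows "perm_op (w_of X) (perm_op (w_of Y) x) = perm_op (w_of Y) (perm_op (w_of X) x)"
proof -
  have gX: "parity_invol (w_of X)" and gY: "parity_invol (w_of Y)" and fX: "finite X" and fY: "finite Y"
    using X Y by (auto simp: good_block_def)
  define c where "c = vdiff (perm_op (w_of X) x) x"
  define d where "d = vdiff (perm_op (w_of Y) x) x"
  have cX: "c \<in> rspan X" unfolding c_def using perm_op_diff_rspan[OF gX x fX] X by (auto simp: good_block_def)
  have dY: "d \<in> rspan Y" unfolding d_def using perm_op_diff_rspan[OF gY x fY] Y by (auto simp: good_block_def)
  have cV: "in_h c" unfolding c_def using in_h_perm_op[OF gX] x by (rule in_h_diff)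
  have dV: "in_h d" unfolding d_def using in_h_perm_op[OF gY] x by (rule in_h_diff)
  have dfix: "perm_op (w_of X) d = d"
  proof (rule perm_op_fixes_orth[OF gX dV])
    show "\<And>j. j \<in> Crd \<Longrightarrow> vdiff (\<zeta> (w_of X j)) (\<zeta> j) \<in> rspan X" using X by (auto simp: good_block_def)
    fix b assume b: "b \<in> X"
    show "\<langle>d, \<alpha> b\<rangle> = 0"
      using form_vspan_left_eq_0[OF dY, where z = "\<alpha> b" and k = k and nn = nn and mm = mm] o b
      by (auto simp: orth_blocks_def form_sym)
  qed
  have cfix: "perm_op (w_of Y) c = c"
  proof (rule perm_op_fixes_orth[OF gY cV])
    show "\<And>j. j \<in> Crd \<Longrightarrow> vdiff (\<zeta> (w_of Y j)) (\<zeta> j) \<in> rspan Y" using Y by (auto simp: good_block_def)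
    fix b assume b: "b \<in> Y"
    show "\<langle>c, \<alpha> b\<rangle> = 0"
      using form_vspan_left_eq_0[OF cX, where z = "\<alpha> b" and k = k and nn = nn and mm = mm] o b
      by (auto simp: orth_blocks_def)
  qed
  have e1: "perm_op (w_of Y) x = vadd x d" unfolding d_def by (simp add: vadd_vdiff_cancel)
  have e2: "perm_op (w_of X) x = vadd x c" unfolding c_def by (simp add: vadd_vdiff_cancel)
  have "perm_op (w_of X) (perm_op (w_of Y) x) = vadd (vadd x c) d"
    unfolding e1 vlinear_add[OF vlinear_perm_op] dfix e2 ..
  also have "\<dots> = vadd (vadd x d) c" by (rule ext) (simp add: vec_apply)
  also have "\<dots> = perm_op (w_of Y) (perm_op (w_of X) x)"
    unfolding e2 vlinear_add[OF vlinear_perm_op] cfix e1 ..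
  finally show ?thesis .
qed

definition w_prod :: "nat set list \<Rightarrow> (nat \<Rightarrow> real) \<Rightarrow> nat \<Rightarrow> real" where
  "w_prod cs = foldr (\<lambda>X f. perm_op (w_of X) \<circ> f) cs id"

lemma w_prod_Nil: "w_prod [] = id" by (simp add: w_prod_def)
lemma w_prod_Cons: "w_prod (X # cs) = perm_op (w_of X) \<circ> w_prod cs"
  by (simp add: w_prod_def)

lemma vlinear_w_prod: "vlinear (w_prod cs)"
proof (induction cs)
  case Nil show ?case unfolding w_prod_Nil by (rule vlinear_id)
next
  case (Cons X cs) show ?case unfolding w_prod_Cons by (rule vlinear_comp[OF vlinear_perm_op Cons.IH])
qed

lemma in_h_w_prod: "\<forall>X\<in>set cs. good_block X \<Longrightarrow> in_h x \<Longrightarrow> in_h (w_prod cs x)"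
  by (induction cs) (auto simp: w_prod_Nil w_prod_Cons good_block_def in_h_perm_op)

lemma w_prod_isometry: "\<forall>X\<in>set cs. good_block X \<Longrightarrow> in_h x \<Longrightarrow> in_h y \<Longrightarrow> \<langle>w_prod cs x, w_prod cs y\<rangle> = \<langle>x, y\<rangle>"
proof (induction cs)
  case Nil then show ?case by (simp add: w_prod_Nil)
next
  case (Cons X cs)
  have g: "parity_invol (w_of X)" using Cons by (auto simp: good_block_def)
  show ?case using Cons perm_op_isometry[OF g in_h_w_prod in_h_w_prod] by (simp add: w_prod_Cons)
qed

lemma w_prod_diff_rspan: assumes "\<forall>X\<in>set cs. good_block X \<and> X \<subseteq> S" "finite S" "in_h x"
  shows "vdiff (w_prod cs x) x \<in> rspan S"
  using assms
proof (induction cs arbitrary: x)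
  case Nil
  have "vdiff (w_prod [] x) x = vzero" by (rule ext) (simp add: w_prod_Nil vec_apply)
  then show ?case by (metis vspan_zero)
next
  case (Cons X cs)
  have g: "parity_invol (w_of X)" and fX: "finite X" and XS: "X \<subseteq> S" using Cons by (auto simp: good_block_def)
  have y: "in_h (w_prod cs x)" using Cons in_h_w_prod by auto
  have a: "vdiff (perm_op (w_of X) (w_prod cs x)) (w_prod cs x) \<in> rspan S"
    using vspan_mono[OF Cons.prems(2) XS perm_op_diff_rspan[OF g y fX]] Cons by (auto simp: good_block_def)
  have b: "vdiff (w_prod cs x) x \<in> rspan S" using Cons by auto
  have "vdiff (w_prod (X # cs) x) x = vadd (vdiff (perm_op (w_of X) (w_prod cs x)) (w_prod cs x)) (vdiff (w_prod cs x) x)"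
    by (rule ext) (simp add: w_prod_Cons vec_apply)
  then show ?case using a b by (metis vspan_add)
qed

lemma w_prod_fixes_orth: assumes "\<forall>X\<in>set cs. good_block X \<and> X \<subseteq> S" "in_h x" "\<And>b. b \<in> S \<Longrightarrow> \<langle>x, \<alpha> b\<rangle> = 0"
  shows "w_prod cs x = x"
  using assms
proof (induction cs)
  case Nil then show ?case by (simp add: w_prod_Nil)
next
  case (Cons X cs)
  have g: "parity_invol (w_of X)" and XS: "X \<subseteq> S" using Cons by (auto simp: good_block_def)
  have "w_prod cs x = x" using Cons by auto
  moreover have "perm_op (w_of X) x = x"
    using perm_op_fixes_orth[OF g Cons.prems(2)] Cons XS by (auto simp: good_block_def)
  ultimately show ?case by (simp add: w_prod_Cons)
qed

lemma perm_op_w_prod_commute: assumes "\<forall>Y\<in>set cs. good_block Y \<and> orth_blocks X Y" "good_block X" "in_h x"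
  shows "perm_op (w_of X) (w_prod cs x) = w_prod cs (perm_op (w_of X) x)"
  using assms
proof (induction cs arbitrary: x)
  case Nil then show ?case by (simp add: w_prod_Nil)
next
  case (Cons Y cs)
  have gX: "parity_invol (w_of X)" using Cons by (auto simp: good_block_def)
  have cY: "good_block Y" "orth_blocks X Y" using Cons by auto
  have wv: "in_h (w_prod cs x)" using Cons in_h_w_prod by auto
  have "perm_op (w_of X) (w_prod (Y # cs) x) = perm_op (w_of Y) (perm_op (w_of X) (w_prod cs x))"
    using perm_ops_commute[OF Cons.prems(2) cY(1) cY(2) wv] by (simp add: w_prod_Cons)
  also have "\<dots> = perm_op (w_of Y) (w_prod cs (perm_op (w_of X) x))" using Cons by auto
  finally show ?case by (simp add: w_prod_Cons)
qed

lemma w_prod_involutive: assumes "\<forall>X\<in>set cs. good_block X" "distinct cs"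
  "\<And>X Y. X \<in> set cs \<Longrightarrow> Y \<in> set cs \<Longrightarrow> X \<noteq> Y \<Longrightarrow> orth_blocks X Y" "in_h x"
  shows "w_prod cs (w_prod cs x) = x"
  using assms
proof (induction cs arbitrary: x)
  case Nil then show ?case by (simp add: w_prod_Nil)
next
  case (Cons X cs)
  have gX: "parity_invol (w_of X)" and cX: "good_block X" using Cons by (auto simp: good_block_def)
  have oc: "\<forall>Y\<in>set cs. good_block Y \<and> orth_blocks X Y" using Cons by auto
  have wv: "in_h (w_prod cs x)" using Cons in_h_w_prod by auto
  have "w_prod (X # cs) (w_prod (X # cs) x) = perm_op (w_of X) (w_prod cs (perm_op (w_of X) (w_prod cs x)))"
    by (simp add: w_prod_Cons)
  also have "\<dots> = perm_op (w_of X) (perm_op (w_of X) (w_prod cs (w_prod cs x)))"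
    using perm_op_w_prod_commute[OF oc cX wv] by simp
  also have "w_prod cs (w_prod cs x) = x" using Cons by auto
  also have "perm_op (w_of X) (perm_op (w_of X) x) = x" using perm_op_involutive[OF gX Cons.prems(4)] .
  finally show ?case .
qed

section \<open>Linear independence of the simple roots\<close>

lemma simple_apply: assumes b: "b \<in> Nodes"
  shows "\<alpha> b i = (if k \<noteq> GL \<and> b = tail then
            (if k = B then of_bool (i = tail) else if k = C then 2 * of_bool (i = tail)
             else of_bool (i = tail - 1) + of_bool (i = tail))
          else of_bool (i = b) - of_bool (i = Suc b))"
proof (cases "k \<noteq> GL \<and> b = tail")
  case True
  have q1: "tail \<in> Crd" using True nn_ge_1 by (auto simp: Crd_osp)
  have q2: "tail - 1 \<in> Crd" if kD: "k = D"
  proof -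
    have ng: "k \<noteq> GL" using kD by simp
    show ?thesis using nn_ge_2_D[OF kD] unfolding Crd_osp[OF ng] by auto
  qed
  show ?thesis
  proof (cases k)
    case GL then show ?thesis using True by simp
  next
    case B
    have "\<alpha> b = unitv tail" using True simple_B[OF B] zeta_Crd[OF q1] by simp
    then show ?thesis using True B by (simp add: unitv_apply of_bool_def)
  next
    case C
    have "\<alpha> b = vsmul 2 (unitv tail)" using True simple_C[OF C] zeta_Crd[OF q1] by simp
    then show ?thesis using True C by (simp add: unitv_apply of_bool_def vec_apply)
  next
    case D
    have "\<alpha> b = vadd (unitv (tail - 1)) (unitv tail)" using True simple_D[OF D] zeta_Crd[OF q1] zeta_Crd[OF q2[OF D]] by simp
    then show ?thesis using True D by (simp add: unitv_apply of_bool_def vec_apply)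
  qed
next
  case False
  have "\<alpha> b = vdiff (unitv b) (unitv (Suc b))" using simple_nontail[OF b False] zeta_Crd by metis
  then show ?thesis using False by (subst if_not_P) (simp_all add: unitv_apply of_bool_def vec_apply)
qed

definition partial_sum :: "nat \<Rightarrow> (nat \<Rightarrow> real) \<Rightarrow> real" where
  "partial_sum c x = (\<Sum>i\<in>{1..c}. x i)"

definition coweight_cut :: "nat \<Rightarrow> nat" where "coweight_cut c = (if k = D \<and> c = tail then tail - 1 else c)"
definition coweight_scale :: "nat \<Rightarrow> real" where
  "coweight_scale c = (if (k = D \<and> tail - 1 \<le> c) \<or> (k = C \<and> c = tail) then 1/2 else 1)"
definition coweight_tail :: "nat \<Rightarrow> real" where
  "coweight_tail c = (if k = D \<and> c = tail - 1 then -1/2 else if k = D \<and> c = tail then 1/2 else 0)"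
definition coweight :: "nat \<Rightarrow> (nat \<Rightarrow> real) \<Rightarrow> real" where
  "coweight c x = coweight_scale c * partial_sum (coweight_cut c) x + coweight_tail c * x tail"

lemma coweight_lincomb: "coweight c (vsum (\<lambda>b. vsmul (f b) (v b)) X) = (\<Sum>b\<in>X. f b * coweight c (v b))"
proof -
  have p: "partial_sum d (vsum (\<lambda>b. vsmul (f b) (v b)) X) = (\<Sum>b\<in>X. f b * partial_sum d (v b))" for d
    unfolding partial_sum_def vsum_apply vsmul_apply
    by (simp add: sum_distrib_left sum.swap[of _ X])
  show ?thesis unfolding coweight_def p
    by (simp add: vec_apply sum_distrib_left sum.distrib algebra_simps)
qed

lemma sum_of_bool_eq: "finite X \<Longrightarrow> (\<Sum>i\<in>X. of_bool (i = j)) = of_bool (j \<in> X)"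
  by (simp add: of_bool_def sum.delta')

lemma partial_sum_simple: assumes b: "b \<in> Nodes"
  shows "partial_sum d (\<alpha> b) = (if k \<noteq> GL \<and> b = tail then
            (if k = B then of_bool (tail \<le> d) else if k = C then 2 * of_bool (tail \<le> d)
             else of_bool (tail - 1 \<le> d) + of_bool (tail \<le> d))
          else of_bool (b \<le> d) - of_bool (Suc b \<le> d))"
proof -
  have b1: "1 \<le> b" using Nodes_bounds b by auto
  have q1: "k \<noteq> GL \<Longrightarrow> 1 \<le> tail" "k \<noteq> GL \<Longrightarrow> k \<noteq> B \<Longrightarrow> k \<noteq> C \<Longrightarrow> 2 \<le> tail"
    using nn_ge_1 nn_ge_2_D by (auto, cases k, auto)
  have q3: "k \<noteq> GL \<Longrightarrow> k \<noteq> B \<Longrightarrow> k \<noteq> C \<Longrightarrow> Suc 0 \<le> tail - Suc 0" using q1 by auto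
  show ?thesis unfolding partial_sum_def simple_apply[OF b]
    using b1 q1 q3 by (auto simp: sum.distrib sum_subtractf sum_of_bool_eq sum_distrib_left[symmetric])
qed

lemma coweight_simple: assumes b: "b \<in> Nodes" and c: "c \<in> Nodes"
  shows "coweight c (\<alpha> b) = of_bool (b = c)"
proof -
  have b1: "1 \<le> b" "1 \<le> c" using Nodes_bounds b c by auto
  have osp: "k \<noteq> GL \<Longrightarrow> b \<le> tail \<and> c \<le> tail" using b c Nodes_osp by auto
  have q1: "1 \<le> tail" "k = D \<Longrightarrow> 2 \<le> tail" using nn_ge_1 nn_ge_2_D by auto
  show ?thesis unfolding coweight_def partial_sum_simple[OF b] simple_apply[OF b] coweight_scale_def coweight_tail_def coweight_cut_def
    using b1 osp q1 by (cases k) (auto simp: of_bool_def)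
qed

lemma simple_in_rspan_imp_mem: assumes c: "c \<in> Nodes" and S: "S \<subseteq> Nodes" and ac: "\<alpha> c \<in> rspan S" shows "c \<in> S"
proof (rule ccontr)
  assume cS: "c \<notin> S"
  obtain f where f: "\<alpha> c = vsum (\<lambda>b. vsmul (f b) (\<alpha> b)) S" using ac unfolding vspan_def by blast
  have "coweight c (\<alpha> c) = 1" using coweight_simple[OF c c] by (simp add: of_bool_def)
  moreover have "coweight c (\<alpha> c) = (\<Sum>b\<in>S. f b * coweight c (\<alpha> b))" unfolding f coweight_lincomb ..
  moreover have "\<dots> = 0" using coweight_simple c S cS by (auto simp: of_bool_def intro!: sum.neutral)
  ultimately show False by simp
qed

end

section \<open>The commutation argument\<close>

locale twisted_commutation = super_setting +
  fixes S :: "nat set" and \<tau> :: "nat \<Rightarrow> nat" and T W :: "(nat \<Rightarrow> real) \<Rightarrow> nat \<Rightarrow> real"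
  assumes S_subset: "S \<subseteq> Nodes"
    and tau_bij: "bij_betw \<tau> Nodes Nodes"
    and tau_form: "\<And>a b. a \<in> Nodes \<Longrightarrow> b \<in> Nodes \<Longrightarrow> \<langle>\<alpha> (\<tau> a), \<alpha> (\<tau> b)\<rangle> = \<langle>\<alpha> a, \<alpha> b\<rangle>"
    and T_linear: "vlinear T"
    and T_simple: "\<And>a. a \<in> Nodes \<Longrightarrow> T (\<alpha> a) = \<alpha> (\<tau> a)"
    and W_linear: "vlinear W"
    and in_h_W: "\<And>x. in_h x \<Longrightarrow> in_h (W x)"
    and W_involutive: "\<And>x. in_h x \<Longrightarrow> W (W x) = x"
    and W_isometry: "\<And>x y. in_h x \<Longrightarrow> in_h y \<Longrightarrow> \<langle>W x, W y\<rangle> = \<langle>x, y\<rangle>"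
    and W_diff_rspan: "\<And>x. in_h x \<Longrightarrow> vdiff (W x) x \<in> rspan S"
    and W_fixes_orth: "\<And>x. in_h x \<Longrightarrow> (\<And>b. b \<in> S \<Longrightarrow> \<langle>x, \<alpha> b\<rangle> = 0) \<Longrightarrow> W x = x"
    and simple_tau_S: "\<And>a. a \<in> S \<Longrightarrow> \<alpha> (\<tau> a) = vneg (W (\<alpha> a))"
begin

lemma finite_S: "finite S"
  using S_subset finite_Nodes finite_subset by blast

lemma tau_Nodes: "a \<in> Nodes \<Longrightarrow> \<tau> a \<in> Nodes"
  using tau_bij by (auto simp: bij_betw_def)

lemma rspan_S_subset: "x \<in> rspan S \<Longrightarrow> x \<in> rspan Nodes"
  using vspan_mono[OF finite_Nodes S_subset] by blast

lemma T_simple_rspan: "b \<in> Y \<Longrightarrow> Y \<subseteq> Nodes \<Longrightarrow> \<tau> ` Y \<subseteq> Y \<Longrightarrow> finite Y \<Longrightarrow> T (\<alpha> b) \<in> rspan Y"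
  using T_simple vspan_base by (metis image_subset_iff subsetD)

lemma T_rspan: "x \<in> rspan Nodes \<Longrightarrow> T x \<in> rspan Nodes"
  using vlinear_vspan[OF T_linear finite_Nodes] T_simple_rspan[OF _ subset_refl] tau_Nodes finite_Nodes
  by blast

lemma T_isometry:
  assumes "x \<in> rspan Nodes" "y \<in> rspan Nodes"
  shows "\<langle>T x, T y\<rangle> = \<langle>x, y\<rangle>"
proof -
  obtain f where f: "x = vsum (\<lambda>b. vsmul (f b) (\<alpha> b)) Nodes" using assms(1) by (rule vspanE)
  obtain g where g: "y = vsum (\<lambda>b. vsmul (g b) (\<alpha> b)) Nodes" using assms(2) by (rule vspanE)
  have Tx: "T x = vsum (\<lambda>b. vsmul (f b) (\<alpha> (\<tau> b))) Nodes"
    and Ty: "T y = vsum (\<lambda>b. vsmul (g b) (\<alpha> (\<tau> b))) Nodes"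
    unfolding f g vlinear_lincomb[OF T_linear] using T_simple by (auto intro: vsum_cong)
  show ?thesis
    unfolding Tx Ty unfolding f g form_lincomb using tau_form by simp
qed

lemma W_self_adjoint: "in_h x \<Longrightarrow> in_h y \<Longrightarrow> \<langle>W x, y\<rangle> = \<langle>x, W y\<rangle>"
  using W_isometry[OF _ in_h_W] W_involutive by metis

lemma W_simple_S: "b \<in> S \<Longrightarrow> W (\<alpha> b) = vneg (\<alpha> (\<tau> b))"
  using simple_tau_S vneg_vneg by metis

lemma tau_S: "b \<in> S \<Longrightarrow> \<tau> b \<in> S"
proof -
  assume b: "b \<in> S"
  then have "b \<in> Nodes" using S_subset by blast
  have "W (\<alpha> b) = vadd (\<alpha> b) (vdiff (W (\<alpha> b)) (\<alpha> b))" by (rule ext) (simp add: vec_apply)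
  also have "\<dots> \<in> rspan S"
    using vspan_add vspan_base[OF finite_S b] W_diff_rspan[OF in_h_simple[OF \<open>b \<in> Nodes\<close>]] by blast
  finally have "\<alpha> (\<tau> b) \<in> rspan S" using simple_tau_S[OF b] vspan_neg by metis
  then show "\<tau> b \<in> S" using simple_in_rspan_imp_mem tau_Nodes \<open>b \<in> Nodes\<close> S_subset by blast
qed

lemma tau_image_S: "\<tau> ` S = S"
proof -
  have "inj_on \<tau> S" using tau_bij S_subset by (auto simp: bij_betw_def intro: inj_on_subset)
  then show ?thesis using tau_S finite_S by (simp add: endo_inj_surj image_subsetI)
qed

lemma simple_tau_tau: "b \<in> S \<Longrightarrow> \<alpha> (\<tau> (\<tau> b)) = \<alpha> b"
  using simple_tau_S tau_S vlinear_neg[OF W_linear] W_involutive in_h_simple S_subset vneg_vneg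
  by (metis subsetD)

lemma T_W_commute_rspan_S:
  assumes "p \<in> rspan S"
  shows "T (W p) = W (T p)"
proof -
  have "(T \<circ> W) p = (W \<circ> T) p"
  proof (rule vlinear_eq_on_vspan[OF vlinear_comp vlinear_comp assms])
    fix b assume b: "b \<in> S"
    have "T (W (\<alpha> b)) = vneg (\<alpha> b)"
      using W_simple_S[OF b] vlinear_neg[OF T_linear] T_simple tau_Nodes simple_tau_tau[OF b] b S_subset
      by auto
    also have "\<dots> = W (T (\<alpha> b))"
      using T_simple W_simple_S[OF tau_S[OF b]] simple_tau_tau[OF b] b S_subset by auto
    finally show "(T \<circ> W) (\<alpha> b) = (W \<circ> T) (\<alpha> b)" by simp
  qed (use T_linear W_linear in auto)
  then show ?thesis by simp
qed

definition commutator :: "(nat \<Rightarrow> real) \<Rightarrow> nat \<Rightarrow> real" where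
  "commutator x = vdiff (T (W x)) (W (T x))"

context
  fixes x
  assumes x: "x \<in> rspan Nodes"
begin

lemma in_h_x: "in_h x"
  using in_h_rspan[OF x subset_refl] .

lemma commutator_rspan_S: "commutator x \<in> rspan S"
proof -
  have Tx: "in_h (T x)" using in_h_rspan[OF T_rspan[OF x] subset_refl] by simp
  have "commutator x = vdiff (T (vdiff (W x) x)) (vdiff (W (T x)) (T x))"
    unfolding commutator_def vlinear_diff[OF T_linear] by (rule ext) (simp add: vec_apply)
  moreover have "T (vdiff (W x) x) \<in> rspan S"
    using vlinear_vspan[OF T_linear finite_S W_diff_rspan[OF in_h_x]] T_simple_rspan S_subset
      tau_S finite_S by blast
  ultimately show ?thesis using vspan_diff W_diff_rspan[OF Tx] by metis
qed

lemma commutator_orth_S: "c \<in> S \<Longrightarrow> \<langle>commutator x, \<alpha> c\<rangle> = 0"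
proof -
  assume "c \<in> S"
  then obtain b where b: "b \<in> S" "c = \<tau> b" using tau_image_S by blast
  then have nodes: "b \<in> Nodes" "\<tau> b \<in> Nodes" using S_subset tau_Nodes by auto
  have spans: "\<alpha> b \<in> rspan Nodes" "\<alpha> (\<tau> b) \<in> rspan Nodes"
    using nodes vspan_base[OF finite_Nodes] by auto
  have "vadd x (vdiff (W x) x) \<in> rspan Nodes"
    using vspan_add[OF x rspan_S_subset[OF W_diff_rspan[OF in_h_x]]] .
  then have Wx: "W x \<in> rspan Nodes" by (simp only: vadd_vdiff_cancel)
  have "\<langle>T (W x), \<alpha> (\<tau> b)\<rangle> = \<langle>W x, \<alpha> b\<rangle>"
    using T_isometry[OF Wx spans(1)] T_simple nodes by simp
  also have "\<dots> = - \<langle>x, \<alpha> (\<tau> b)\<rangle>"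
    using W_self_adjoint[OF in_h_x in_h_simple] W_simple_S[OF b(1)] nodes by (simp add: form_neg_right)
  finally have 1: "\<langle>T (W x), \<alpha> (\<tau> b)\<rangle> = - \<langle>x, \<alpha> (\<tau> b)\<rangle>" .
  have "\<langle>W (T x), \<alpha> (\<tau> b)\<rangle> = - \<langle>T x, T (\<alpha> (\<tau> b))\<rangle>"
    using W_self_adjoint[OF in_h_rspan[OF T_rspan[OF x] subset_refl] in_h_simple] W_simple_S[OF tau_S[OF b(1)]]
      simple_tau_tau[OF b(1)] T_simple nodes S_subset by (simp add: form_neg_right)
  also have "\<dots> = - \<langle>x, \<alpha> (\<tau> b)\<rangle>"
    using T_isometry[OF x spans(2)] by simp
  finally have 2: "\<langle>W (T x), \<alpha> (\<tau> b)\<rangle> = - \<langle>x, \<alpha> (\<tau> b)\<rangle>" .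
  show ?thesis unfolding commutator_def b(2) form_diff_left 1 2 by simp
qed

lemma commutator_eq_zero: "commutator x = vzero"
proof -
  have E_in_h: "in_h (commutator x)" using in_h_rspan[OF commutator_rspan_S S_subset] .
  have fixed: "W (commutator x) = commutator x"
    using W_fixes_orth[OF E_in_h] commutator_orth_S by blast
  define d where "d = vdiff (W x) x"
  have d: "d \<in> rspan S" "W x = vadd x d"
    unfolding d_def using W_diff_rspan[OF in_h_x] by (simp_all add: vadd_vdiff_cancel)
  have "vdiff (T (W (W x))) (W (T (W x))) = commutator x"
    unfolding commutator_def d(2) vlinear_add[OF W_linear] vlinear_add[OF T_linear]
      T_W_commute_rspan_S[OF d(1)] by (rule ext) (simp add: vec_apply)
  moreover have "vdiff (T (W (W x))) (W (T (W x))) = vneg (W (commutator x))"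
    unfolding commutator_def vlinear_diff[OF W_linear] W_involutive[OF in_h_x]
      W_involutive[OF in_h_rspan[OF T_rspan[OF x] subset_refl]] by (rule ext) (simp add: vec_apply)
  ultimately show ?thesis using fixed vneg_self_eq_zero by metis
qed

end

lemma T_W_commute:
  assumes "x \<in> rspan Nodes"
  shows "T (W x) = W (T x)"
proof (rule ext)
  fix c
  have "vdiff (T (W x)) (W (T x)) c = 0"
    using commutator_eq_zero[OF assms] unfolding commutator_def by (simp add: vec_apply)
  then show "T (W x) c = W (T x) c" by (simp add: vec_apply)
qed

end

context super_setting begin

abbreviation "edges S \<equiv> dyn_edges k nn mm S"
abbreviation "cmp S a \<equiv> Defs.comp k nn mm S a"

lemma edges_iff: "(a, b) \<in> edges S \<longleftrightarrow> a \<in> S \<and> b \<in> S \<and> a \<noteq> b \<and> \<langle>\<alpha> a, \<alpha> b\<rangle> \<noteq> 0"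
  by (simp add: dyn_edges_def)

lemma edges_sym: "(a, b) \<in> edges S \<Longrightarrow> (b, a) \<in> edges S"
  unfolding edges_iff using form_sym[of k nn mm "\<alpha> a" "\<alpha> b"] by auto

lemma converse_edges: "(edges S)\<inverse> = edges S"
proof (rule set_eqI)
  fix p show "p \<in> (edges S)\<inverse> \<longleftrightarrow> p \<in> edges S" by (cases p) (auto intro: edges_sym)
qed

lemma edges_rtrancl_sym: assumes "(a, b) \<in> (edges S)\<^sup>*" shows "(b, a) \<in> (edges S)\<^sup>*"
proof -
  have "(b, a) \<in> ((edges S)\<inverse>)\<^sup>*" using assms by (rule rtrancl_converseI)
  thus ?thesis unfolding converse_edges .
qed

lemma cmp_iff: "b \<in> cmp S a \<longleftrightarrow> b \<in> S \<and> (a, b) \<in> (edges S)\<^sup>*"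
  unfolding Defs.comp_def by simp

lemma cmp_self: "a \<in> S \<Longrightarrow> a \<in> cmp S a" by (simp add: cmp_iff)
lemma cmp_subset: "cmp S a \<subseteq> S" by (auto simp: cmp_iff)

lemma cmp_eq: assumes "b \<in> cmp S a" shows "cmp S b = cmp S a"
proof -
  have ab: "(a, b) \<in> (edges S)\<^sup>*" using assms by (simp add: cmp_iff)
  have ba: "(b, a) \<in> (edges S)\<^sup>*" using edges_rtrancl_sym[OF ab] .
  show ?thesis
  proof (rule set_eqI)
    fix c show "c \<in> cmp S b \<longleftrightarrow> c \<in> cmp S a"
      unfolding cmp_iff using rtrancl_trans[OF ab, of c] rtrancl_trans[OF ba, of c] by blast
  qed
qed

lemma cmp_edge: assumes "b \<in> cmp S a" "(b, c) \<in> edges S" shows "c \<in> cmp S a"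
proof -
  have "(a, b) \<in> (edges S)\<^sup>*" using assms(1) by (simp add: cmp_iff)
  hence "(a, c) \<in> (edges S)\<^sup>*" using assms(2) by (rule rtrancl_into_rtrancl)
  moreover have "c \<in> S" using assms(2) by (simp add: edges_iff)
  ultimately show ?thesis by (simp add: cmp_iff)
qed

lemma cmp_orth: assumes "cmp S a \<noteq> cmp S a'" "b \<in> cmp S a" "b' \<in> cmp S a'"
  shows "\<langle>\<alpha> b, \<alpha> b'\<rangle> = 0"
proof (rule ccontr)
  assume nz: "\<langle>\<alpha> b, \<alpha> b'\<rangle> \<noteq> 0"
  have e1: "cmp S b = cmp S a" "cmp S b' = cmp S a'" using cmp_eq assms by auto
  show False
  proof (cases "b = b'")
    case True then show False using e1 assms(1) by simp
  next
    case False
    have "(b, b') \<in> edges S" using False nz assms(2,3) cmp_subset by (auto simp: edges_iff)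
    hence "b' \<in> cmp S a" using cmp_edge assms(2) by blast
    hence "cmp S b' = cmp S a" using cmp_eq by blast
    thus False using e1 assms(1) by simp
  qed
qed

lemma finite_cmp: "S \<subseteq> Nodes \<Longrightarrow> finite (cmp S a)"
  by (rule finite_subset[OF _ finite_Nodes]) (use cmp_subset in blast)

lemma kind_eq_D: "k \<noteq> GL \<Longrightarrow> k \<noteq> B \<Longrightarrow> k \<noteq> C \<Longrightarrow> k = D"
  by (cases k) auto

lemma dual_tail_bounds: "k \<noteq> GL \<Longrightarrow> tail + 1 \<le> dual tail \<and> dual tail \<le> dimV"
  using dimV_osp_bounds nn_ge_1 by (auto simp: dual_eq)

lemma simple_eq_zeta_diff: assumes b: "b \<in> Nodes" and g: "\<not> (k = B \<and> b = tail)"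
  shows "\<exists>x z. sr_supp k nn mm b = {x, z} \<and> x \<in> {1..dimV} \<and> z \<in> {1..dimV} \<and> \<alpha> b = vdiff (\<zeta> x) (\<zeta> z)"
proof (cases "k \<noteq> GL \<and> b = tail")
  case False
  have "sr_supp k nn mm b = {b, Suc b}" using False by (auto simp: sr_supp_def)
  moreover have "b \<in> {1..dimV}" "Suc b \<in> {1..dimV}" using Nodes_bounds[OF b] by auto
  ultimately show ?thesis using simple_nontail[OF b False] by blast
next
  case True
  have ng: "k \<noteq> GL" and bq: "b = tail" using True by auto
  have q: "tail \<in> {1..dimV}" "dual tail \<in> {1..dimV}" using dual_tail_bounds[OF ng] nn_ge_1 by auto
  have zp: "\<zeta> (dual tail) = vneg (\<zeta> tail)" using zeta_dual[OF ng q(1)] .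
  show ?thesis
  proof (cases k)
    case GL then show ?thesis using ng by simp
  next
    case B then show ?thesis using g bq by simp
  next
    case C
    have "sr_supp k nn mm b = {tail, dual tail}" using bq C by (simp add: sr_supp_def)
    moreover have "\<alpha> b = vdiff (\<zeta> tail) (\<zeta> (dual tail))" using simple_C[OF C] bq zp
      by (auto simp: fun_eq_iff vec_apply)
    ultimately show ?thesis using q by blast
  next
    case D
    have q1: "tail - 1 \<in> {1..dimV}" using nn_ge_2_D[OF D] dimV_osp_bounds[OF ng] by auto
    have "sr_supp k nn mm b = {tail - 1, dual tail}" using bq D by (simp add: sr_supp_def)
    moreover have "\<alpha> b = vdiff (\<zeta> (tail - 1)) (\<zeta> (dual tail))" using simple_D[OF D] bq zp
      by (auto simp: fun_eq_iff vec_apply)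
    ultimately show ?thesis using q q1 by blast
  qed
qed

lemma sr_supp_range: assumes b: "b \<in> Nodes" shows "sr_supp k nn mm b \<subseteq> {1..dimV}"
proof (cases "k \<noteq> GL \<and> b = tail")
  case False
  then show ?thesis using Nodes_bounds[OF b] by (auto simp: sr_supp_def)
next
  case True
  have ng: "k \<noteq> GL" using True by auto
  have "tail \<in> {1..dimV}" "dual tail \<in> {1..dimV}" "k = D \<Longrightarrow> tail - 1 \<in> {1..dimV}"
    using dual_tail_bounds[OF ng] nn_ge_1 nn_ge_2_D dimV_osp_bounds[OF ng] by auto
  then show ?thesis using True by (cases k) (auto simp: sr_supp_def)
qed

lemma simple_nonzero_coord: assumes b: "b \<in> Nodes" and nz: "\<alpha> b i \<noteq> 0"
  shows "i \<in> (if k \<noteq> GL \<and> b = tail then (if k = D then {tail - 1, tail} else {tail}) else {b, Suc b})"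
  using nz kind_eq_D unfolding simple_apply[OF b] by (auto simp: of_bool_def split: if_splits)

lemma sr_supp_nontail: "\<not> (k \<noteq> GL \<and> b = tail) \<Longrightarrow> sr_supp k nn mm b = {b, Suc b}"
  by (auto simp: sr_supp_def)

lemma sr_supp_tail: "k \<noteq> GL \<Longrightarrow> sr_supp k nn mm tail = (if k = D then {tail - 1, dual tail} else {tail, dual tail})"
  by (cases k) (auto simp: sr_supp_def)

lemma edge_supports_meet:
  assumes b: "b \<in> Nodes" and b': "b' \<in> Nodes" and ne: "b \<noteq> b'" and nz: "\<langle>\<alpha> b, \<alpha> b'\<rangle> \<noteq> 0"
  shows "sr_supp k nn mm b \<inter> sr_supp k nn mm b' \<noteq> {}"
proof -
  obtain i where i: "\<alpha> b i \<noteq> 0" "\<alpha> b' i \<noteq> 0"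
    using nz unfolding form_eq_signed_sum by (metis (no_types, lifting) mult_zero_left mult_zero_right sum.neutral)
  have "k \<noteq> GL \<Longrightarrow> b \<le> tail \<and> b' \<le> tail" using b b' Nodes_osp by auto
  then show ?thesis
    using simple_nonzero_coord[OF b i(1)] simple_nonzero_coord[OF b' i(2)] ne dual_tail_bounds
    by (auto simp: sr_supp_def split: if_splits kind.splits)
qed

definition node_pos :: "nat \<Rightarrow> nat" where "node_pos b = (if k = D \<and> b = tail then tail - 1 else b)"

lemma node_pos_edge:
  assumes b: "b \<in> Nodes" and c: "c \<in> Nodes" and ne: "b \<noteq> c" and nz: "\<langle>\<alpha> b, \<alpha> c\<rangle> \<noteq> 0"
  shows "node_pos c \<le> node_pos b + 1"
proof -
  have "k \<noteq> GL \<Longrightarrow> b \<le> tail \<and> c \<le> tail" using b c Nodes_osp by auto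
  then show ?thesis
    using edge_supports_meet[OF b c ne nz] ne dual_tail_bounds
    by (auto simp: sr_supp_def node_pos_def split: if_splits kind.splits)
qed

lemma node_pos_intermediate: assumes SI: "S \<subseteq> Nodes" and p: "(a, b) \<in> (edges S)\<^sup>*" and a: "a \<in> S"
  shows "node_pos a \<le> v \<Longrightarrow> v \<le> node_pos b \<Longrightarrow> \<exists>c. c \<in> cmp S a \<and> node_pos c = v"
  using p
proof (induction b arbitrary: v rule: rtrancl_induct)
  case base
  then show ?case using cmp_self[OF a] by (intro exI[of _ a]) auto
next
  case (step b b')
  show ?case
  proof (cases "v \<le> node_pos b")
    case True then show ?thesis using step by blast
  next
    case False
    have e: "b \<in> S" "b' \<in> S" "b \<noteq> b'" "\<langle>\<alpha> b, \<alpha> b'\<rangle> \<noteq> 0" using step(2) by (auto simp: edges_iff)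
    have "node_pos b' \<le> node_pos b + 1" using node_pos_edge e SI by blast
    hence "v = node_pos b'" using False step by auto
    moreover have "b' \<in> cmp S a" using step(1,2) e by (auto simp: cmp_iff)
    ultimately show ?thesis by blast
  qed
qed

section \<open>Components of type A\<close>

lemma wperm_eq_mirror: "wperm k nn mm X j = (if j \<in> jset k nn mm X then mirror (jset k nn mm X) j
   else if k \<noteq> GL \<and> dual j \<in> jset k nn mm X then dual (mirror (jset k nn mm X) (dual j)) else j)"
  unfolding wperm_def mirror_def jlist_def Let_def ..

lemma osp_comp_iff: "osp_comp k nn mm X \<longleftrightarrow> (k = D \<and> tail - 1 \<in> X \<and> tail \<in> X) \<or> ((k = B \<or> k = C) \<and> tail \<in> X)"
  by (cases k) (auto simp: osp_comp_def)

lemma zeta_diff_self: "vdiff (\<zeta> x) (\<zeta> x) = vzero"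
  by (rule ext) (simp add: vec_apply)

lemma zeta_diff_sr_supp: assumes c: "c \<in> X" "X \<subseteq> Nodes" "finite X" and g: "\<not> (k = B \<and> c = tail)"
  and y: "y \<in> sr_supp k nn mm c" and u: "u \<in> sr_supp k nn mm c"
  shows "vdiff (\<zeta> y) (\<zeta> u) \<in> rspan X"
proof -
  have cI: "c \<in> Nodes" using c by blast
  obtain x z where xz1: "sr_supp k nn mm c = {x, z}" and xz2: "\<alpha> c = vdiff (\<zeta> x) (\<zeta> z)"
    using simple_eq_zeta_diff[OF cI g] by blast
  have m: "vdiff (\<zeta> x) (\<zeta> z) \<in> rspan X" unfolding xz2[symmetric] by (rule vspan_base[OF c(3) c(1)])
  have e: "vdiff (\<zeta> z) (\<zeta> x) = vneg (vdiff (\<zeta> x) (\<zeta> z))" by (rule ext) (simp add: vec_apply)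
  have m2: "vdiff (\<zeta> z) (\<zeta> x) \<in> rspan X" unfolding e by (rule vspan_neg[OF m])
  have m0: "vdiff (\<zeta> u) (\<zeta> u) \<in> rspan X" unfolding zeta_diff_self by (rule vspan_zero)
  have yy: "y = x \<or> y = z" and uu: "u = x \<or> u = z" using y u xz1 by auto
  show ?thesis
  proof (cases "y = u")
    case True then show ?thesis using m0 by simp
  next
    case False
    hence "(y = x \<and> u = z) \<or> (y = z \<and> u = x)" using yy uu by blast
    thus ?thesis using m m2 by blast
  qed
qed

lemma zeta_diff_trans: "vdiff (\<zeta> y) (\<zeta> w) = vadd (vdiff (\<zeta> y) (\<zeta> u)) (vdiff (\<zeta> u) (\<zeta> w))"
  by (rule ext) (simp add: vec_apply)

lemma parity_invol_dual_extension:
  assumes J: "J \<subseteq> {1..dimV}"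
    and \<sigma>: "\<And>j. j \<in> J \<Longrightarrow> \<sigma> j \<in> J \<and> \<sigma> (\<sigma> j) = j \<and> odd_at (\<sigma> j) = odd_at j"
    and disj: "\<And>j. k \<noteq> GL \<Longrightarrow> j \<in> J \<Longrightarrow> dual j \<notin> J"
  defines "\<rho> \<equiv> \<lambda>j. if j \<in> J then \<sigma> j else if k \<noteq> GL \<and> dual j \<in> J then dual (\<sigma> (dual j)) else j"
  shows "parity_invol \<rho>"
  unfolding parity_invol_def
proof (rule conjI; intro ballI impI)
  fix j assume j: "j \<in> {1..dimV}"
  consider (in_J) "j \<in> J" | (dual_in_J) "j \<notin> J" "k \<noteq> GL" "dual j \<in> J" | (fixed) "j \<notin> J" "k = GL \<or> dual j \<notin> J"
    by blast
  then show "\<rho> j \<in> {1..dimV} \<and> \<rho> (\<rho> j) = j \<and> odd_at (\<rho> j) = odd_at j"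
  proof cases
    case in_J
    then have "\<sigma> j \<in> {1..dimV}" using \<sigma> J by blast
    then show ?thesis using \<sigma> in_J unfolding \<rho>_def by auto
  next
    case dual_in_J
    then have "\<sigma> (dual j) \<in> J" "\<sigma> (\<sigma> (dual j)) = dual j" "odd_at (\<sigma> (dual j)) = odd_at (dual j)"
      using \<sigma> by auto
    moreover have "dual (\<sigma> (dual j)) \<notin> J" using disj dual_in_J(2) \<open>\<sigma> (dual j) \<in> J\<close> by blast
    moreover have r: "\<sigma> (dual j) \<in> {1..dimV}" using J \<open>\<sigma> (dual j) \<in> J\<close> by blast
    ultimately show ?thesis
      using dual_in_J j dual_range[OF r] dual_dual[OF r] dual_dual[OF j] odd_at_dual[OF r] odd_at_dual[OF j]
      unfolding \<rho>_def by auto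
  next
    case fixed
    then show ?thesis using j unfolding \<rho>_def by auto
  qed
next
  fix j assume "k \<noteq> GL" and j: "j \<in> {1..dimV}"
  have "\<sigma> (dual j) \<in> {1..dimV}" if "dual j \<in> J" using \<sigma>[OF that] J by blast
  then show "\<rho> (dual j) = dual (\<rho> j)"
    using disj[of j] disj[of "\<sigma> j"] \<sigma>[of j] dual_dual[OF j] \<open>k \<noteq> GL\<close>
    unfolding \<rho>_def by (auto simp: dual_dual)
qed

context
  fixes S a
  assumes SI: "S \<subseteq> Nodes" and aS: "a \<in> S"
  fixes X J
  defines X_def: "X \<equiv> cmp S a" and J_def: "J \<equiv> jset k nn mm X"
  assumes nosp: "\<not> osp_comp k nn mm X"
begin

lemma X_subset: "X \<subseteq> Nodes"
  using cmp_subset SI unfolding X_def by blast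

lemma finite_X: "finite X"
  using finite_cmp SI unfolding X_def by blast

lemma a_mem_X: "a \<in> X"
  using cmp_self[OF aS] unfolding X_def .

lemma X_not_B_tail: "b \<in> X \<Longrightarrow> \<not> (k = B \<and> b = tail)"
  using nosp by (auto simp: osp_comp_iff)

lemma J_eq: "J = (\<Union>b\<in>X. sr_supp k nn mm b)"
  using nosp unfolding J_def by (simp add: jset_def)

lemma zeta_diff_path: assumes p: "(a, b) \<in> (edges S)\<^sup>*"
  shows "\<forall>y\<in>sr_supp k nn mm b. \<forall>w\<in>sr_supp k nn mm a. vdiff (\<zeta> y) (\<zeta> w) \<in> rspan X"
  using p
proof (induction b rule: rtrancl_induct)
  case base
  show ?case using zeta_diff_sr_supp[OF a_mem_X X_subset finite_X X_not_B_tail[OF a_mem_X]] by blast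
next
  case (step b c)
  have e: "b \<in> S" "c \<in> S" "b \<noteq> c" "\<langle>\<alpha> b, \<alpha> c\<rangle> \<noteq> 0" using step(2) by (auto simp: edges_iff)
  have bI: "b \<in> Nodes" "c \<in> Nodes" using e SI by auto
  obtain u where u: "u \<in> sr_supp k nn mm b" "u \<in> sr_supp k nn mm c" using edge_supports_meet[OF bI e(3,4)] by blast
  have cX: "c \<in> X" using step(1,2) e by (auto simp: cmp_iff X_def)
  show ?case
  proof (intro ballI)
    fix y w assume y: "y \<in> sr_supp k nn mm c" and w: "w \<in> sr_supp k nn mm a"
    have 1: "vdiff (\<zeta> y) (\<zeta> u) \<in> rspan X" using zeta_diff_sr_supp[OF cX X_subset finite_X X_not_B_tail[OF cX] y u(2)] .
    have 2: "vdiff (\<zeta> u) (\<zeta> w) \<in> rspan X" using step.IH u(1) w by blast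
    show "vdiff (\<zeta> y) (\<zeta> w) \<in> rspan X" unfolding zeta_diff_trans[of y w u] by (rule vspan_add[OF 1 2])
  qed
qed

lemma zeta_diff_J: assumes i: "i \<in> J" and j: "j \<in> J" shows "vdiff (\<zeta> i) (\<zeta> j) \<in> rspan X"
proof -
  obtain b where b: "b \<in> X" "i \<in> sr_supp k nn mm b" using i J_eq by blast
  obtain b' where b': "b' \<in> X" "j \<in> sr_supp k nn mm b'" using j J_eq by blast
  obtain x z where xz: "sr_supp k nn mm a = {x, z}"
    using simple_eq_zeta_diff[OF _ X_not_B_tail[OF a_mem_X]] SI aS by blast
  have w: "x \<in> sr_supp k nn mm a" using xz by auto
  have 1: "vdiff (\<zeta> i) (\<zeta> x) \<in> rspan X" using zeta_diff_path b w by (auto simp: cmp_iff X_def)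
  have 2: "vdiff (\<zeta> j) (\<zeta> x) \<in> rspan X" using zeta_diff_path b' w by (auto simp: cmp_iff X_def)
  have e: "vdiff (\<zeta> i) (\<zeta> j) = vdiff (vdiff (\<zeta> i) (\<zeta> x)) (vdiff (\<zeta> j) (\<zeta> x))" by (rule ext) (simp add: vec_apply)
  show ?thesis unfolding e by (rule vspan_diff[OF 1 2])
qed

lemma J_range: "J \<subseteq> {1..dimV}"
proof
  fix j assume "j \<in> J"
  then obtain b where "b \<in> X" "j \<in> sr_supp k nn mm b" using J_eq by blast
  thus "j \<in> {1..dimV}" using sr_supp_range X_subset by blast
qed

lemma finite_J: "finite J"
  by (rule finite_subset[OF J_range]) simp

lemma J_shape: assumes j: "j \<in> J" and ng: "k \<noteq> GL"
  shows "j \<le> tail \<or> (k = D \<and> tail \<in> X \<and> j = dual tail)"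
proof -
  obtain b where b: "b \<in> X" "j \<in> sr_supp k nn mm b" using j J_eq by blast
  have bq: "b \<le> tail" using b X_subset Nodes_osp[OF ng] by auto
  show ?thesis
  proof (cases "b = tail")
    case False
    then show ?thesis using b bq sr_supp_nontail[of b] by auto
  next
    case True
    have "k \<noteq> B" "k \<noteq> C" using True b nosp by (auto simp: osp_comp_iff)
    hence kD: "k = D" using kind_eq_D ng by blast
    then show ?thesis using b True sr_supp_tail[OF ng] by auto
  qed
qed

lemma J_dual_disjoint: assumes ng: "k \<noteq> GL" and j: "j \<in> J" shows "dual j \<notin> J"
proof
  assume pj: "dual j \<in> J"
  have jr: "j \<in> {1..dimV}" using j J_range by auto
  have n: "2*tail \<le> dimV" using dimV_osp_bounds[OF ng] by auto
  have qqJ: "tail \<in> J \<and> k = D \<and> tail \<in> X"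
  proof (cases "j \<le> tail")
    case True
    have "\<not> dual j \<le> tail" using True n jr by (auto simp: dual_eq)
    hence "k = D \<and> tail \<in> X \<and> dual j = dual tail" using J_shape[OF pj ng] by auto
    moreover hence "j = tail" using dual_inj jr nn_ge_1 n by auto
    ultimately show ?thesis using j by auto
  next
    case False
    hence "k = D \<and> tail \<in> X \<and> j = dual tail" using J_shape[OF j ng] by auto
    moreover hence "dual j = tail" using dual_dual nn_ge_1 n by auto
    ultimately show ?thesis using pj by auto
  qed
  then obtain b where b: "b \<in> X" "tail \<in> sr_supp k nn mm b" using J_eq by blast
  have bq: "b \<le> tail" using b X_subset Nodes_osp[OF ng] by auto
  have pq: "tail + 1 \<le> dual tail" using dual_tail_bounds[OF ng] by auto
  have "b \<noteq> tail"
  proof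
    assume "b = tail"
    hence "tail \<in> {tail - 1, dual tail}" using b qqJ sr_supp_tail[OF ng] by auto
    thus False using pq nn_ge_1 by auto
  qed
  hence "tail \<in> {b, Suc b}" using b sr_supp_nontail[of b] by auto
  hence "b = tail - 1" using \<open>b \<noteq> tail\<close> by auto
  hence "tail - 1 \<in> X" using b by simp
  hence "osp_comp k nn mm X" unfolding osp_comp_iff using qqJ by blast
  thus False using nosp by blast
qed

lemma odd_at_mirror_J: assumes adm: "admissible k nn mm S" and j: "j \<in> J" shows "odd_at (mirror J j) = odd_at j"
proof -
  have "rev (par_seq k nn mm X) = par_seq k nn mm X"
    using adm aS unfolding admissible_def Let_def X_def by blast
  hence "rev (map odd_at (sorted_list_of_set J)) = map odd_at (sorted_list_of_set J)"
    by (simp add: par_seq_def jlist_def J_def)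
  thus ?thesis using mirror_palindrome[OF finite_J j] by blast
qed

lemma parity_invol_typeA:
  assumes adm: "admissible k nn mm S"
  shows "parity_invol (wperm k nn mm X)"
proof -
  have eq: "wperm k nn mm X = (\<lambda>j. if j \<in> J then mirror J j
      else if k \<noteq> GL \<and> dual j \<in> J then dual (mirror J (dual j)) else j)"
    unfolding J_def by (rule ext) (rule wperm_eq_mirror)
  show ?thesis unfolding eq
    by (rule parity_invol_dual_extension[OF J_range])
      (use mirror_mem_invol[OF finite_J] odd_at_mirror_J[OF adm] J_dual_disjoint in auto)
qed

lemma zeta_diff_wperm_typeA: assumes j: "j \<in> Crd" shows "vdiff (\<zeta> (wperm k nn mm X j)) (\<zeta> j) \<in> rspan X"
proof -
  let ?r = "mirror J"
  have rv: "\<And>j. j \<in> J \<Longrightarrow> ?r j \<in> J \<and> ?r (?r j) = j" using mirror_mem_invol[OF finite_J] by blast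
  have rng: "\<And>j. j \<in> J \<Longrightarrow> j \<in> {1..dimV}" using J_range by auto
  have W: "wperm k nn mm X j = (if j \<in> J then ?r j else if k \<noteq> GL \<and> dual j \<in> J then dual (?r (dual j)) else j)"
    unfolding J_def by (rule wperm_eq_mirror)
  have jr: "j \<in> {1..dimV}" using j Crd_subset by auto
  show ?thesis
  proof (cases "j \<in> J")
    case True then show ?thesis using W zeta_diff_J rv by simp
  next
    case nJ: False
    show ?thesis
    proof (cases "k \<noteq> GL \<and> dual j \<in> J")
      case True
      have ng: "k \<noteq> GL" and pj: "dual j \<in> J" using True by auto
      have rpj: "?r (dual j) \<in> J" using rv pj by blast
      have e1: "\<zeta> (dual (?r (dual j))) = vneg (\<zeta> (?r (dual j)))" using zeta_dual[OF ng rng[OF rpj]] .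
      have e2: "\<zeta> j = vneg (\<zeta> (dual j))" using zeta_dual[OF ng dual_range[OF jr]] dual_dual[OF jr] by simp
      have "vdiff (\<zeta> (wperm k nn mm X j)) (\<zeta> j) = vneg (vdiff (\<zeta> (?r (dual j))) (\<zeta> (dual j)))"
        using W nJ True e1 e2 by (auto simp: fun_eq_iff vec_apply)
      then show ?thesis using vspan_neg[OF zeta_diff_J[OF rpj pj]] by simp
    next
      case False
      have "wperm k nn mm X j = j" by (simp only: W if_not_P[OF nJ] if_not_P[OF False])
      then show ?thesis using zeta_diff_self vspan_zero by simp
    qed
  qed
qed

end

section \<open>Orthosymplectic components\<close>

context
  fixes S a
  assumes SI: "S \<subseteq> Nodes" and aS: "a \<in> S"
  fixes Y lo
  defines Y_def: "Y \<equiv> cmp S a" and lo_def: "lo \<equiv> Min Y"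
  assumes osp: "osp_comp k nn mm Y"
begin

lemma finite_Y: "finite Y"
  using finite_cmp SI unfolding Y_def by blast

lemma Y_nonempty: "Y \<noteq> {}"
  using cmp_self[OF aS] unfolding Y_def by blast

lemma lo_mem: "lo \<in> Y" unfolding lo_def using Min_in[OF finite_Y Y_nonempty] .

lemma Y_subset: "Y \<subseteq> Nodes"
  using cmp_subset SI unfolding Y_def by blast

lemma Y_osp_cases: "(k = D \<and> tail - 1 \<in> Y \<and> tail \<in> Y) \<or> ((k = B \<or> k = C) \<and> tail \<in> Y)"
  using osp osp_comp_iff by blast

lemma tail_pred_mem_D: "k = D \<Longrightarrow> tail - 1 \<in> Y"
  using Y_osp_cases by auto

lemma not_GL: "k \<noteq> GL" using osp by (auto simp: osp_comp_iff)

lemma tail_mem: "tail \<in> Y" using osp by (auto simp: osp_comp_iff)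

lemma lo_ge: "1 \<le> lo" using lo_mem Y_subset Nodes_osp[OF not_GL] by auto

lemma lo_le: "lo \<le> tail" unfolding lo_def using Min_le[OF finite_Y tail_mem] .

lemma lo_le_Y: "b \<in> Y \<Longrightarrow> lo \<le> b"
  unfolding lo_def using Min_le[OF finite_Y] by blast

lemma Y_interval:
  assumes v: "lo \<le> v" "v \<le> tail"
  shows "v \<in> Y"
proof (cases "v = tail")
  case True
  then show ?thesis using tail_mem by simp
next
  case False
  define e where "e = (if k = D then tail - 1 else tail)"
  have e: "e \<in> Y" "node_pos e = e" "v \<le> e"
    using False v tail_mem tail_pred_mem_D nn_ge_2_D unfolding e_def node_pos_def by auto
  have Y_lo: "cmp S lo = Y" using cmp_eq[of lo S a] lo_mem unfolding Y_def by simp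
  have lo: "lo \<in> S" using cmp_subset[of S a] lo_mem unfolding Y_def by blast
  have "node_pos lo = lo" using False v unfolding node_pos_def by auto
  have "(lo, e) \<in> (edges S)\<^sup>*" using e(1) cmp_iff[of e S lo] Y_lo by simp
  then have "\<exists>c. c \<in> cmp S lo \<and> node_pos c = v"
    by (rule node_pos_intermediate[OF SI _ lo]) (use e v \<open>node_pos lo = lo\<close> in auto)
  then obtain c where c: "c \<in> Y" "node_pos c = v" using Y_lo by auto
  then show ?thesis using e unfolding node_pos_def e_def by (auto split: if_splits)
qed

lemma jset_Y: "jset k nn mm Y = {lo..dual lo}"
  using osp unfolding lo_def by (simp add: jset_def)

lemma lo_dual_bounds: "tail < dual lo" "dual lo \<le> dimV"
  using lo_ge lo_le dimV_osp_bounds[OF not_GL] nn_ge_1 by (auto simp: dual_eq)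

lemma wperm_osp: assumes j: "j \<in> {1..dimV}"
  shows "wperm k nn mm Y j = (if lo \<le> j \<and> j \<le> dual lo then dual j else j)"
proof (cases "lo \<le> j \<and> j \<le> dual lo")
  case True
  have "mirror (jset k nn mm Y) j = lo + dual lo - j" unfolding jset_Y using mirror_interval True by blast
  also have "\<dots> = dual j" using True lo_dual_bounds lo_ge by (auto simp: dual_eq)
  finally show ?thesis using True unfolding wperm_eq_mirror[of Y j] jset_Y by simp
next
  case False
  have "\<not> (lo \<le> dual j \<and> dual j \<le> dual lo)" using False j lo_dual_bounds lo_ge by (auto simp: dual_eq)
  hence n2: "\<not> (k \<noteq> GL \<and> dual j \<in> (jset k nn mm Y))" unfolding jset_Y by simp
  have n1: "j \<notin> jset k nn mm Y" using False unfolding jset_Y by simp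
  show ?thesis by (simp only: wperm_eq_mirror[of Y j] if_not_P[OF n1] if_not_P[OF n2] if_not_P[OF False])
qed

lemma zeta_tail_rspan: "\<zeta> tail \<in> rspan Y"
proof (cases k)
  case GL then show ?thesis using not_GL by simp
next
  case B
  then show ?thesis by (metis simple_B vspan_base[OF finite_Y tail_mem])
next
  case C
  have "vsmul (1/2) (\<alpha> tail) = \<zeta> tail" unfolding simple_C[OF C] by (rule ext) (simp add: vec_apply)
  then show ?thesis using vspan_smul vspan_base[OF finite_Y tail_mem] by metis
next
  case D
  have "2 \<le> tail" using nn_ge_2_D[OF D] by simp
  then have "Suc (tail - 1) = tail" "tail - 1 \<noteq> tail" by auto
  then have "\<alpha> (tail - 1) = vdiff (\<zeta> (tail - 1)) (\<zeta> tail)"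
    using simple_nontail[of "tail - 1"] tail_pred_mem_D[OF D] Y_subset by auto
  then have "vsmul (1/2) (vdiff (\<alpha> tail) (\<alpha> (tail - 1))) = \<zeta> tail"
    unfolding simple_D[OF D] by (auto simp: fun_eq_iff vec_apply)
  then show ?thesis
    using vspan_smul vspan_diff vspan_base[OF finite_Y tail_mem] vspan_base[OF finite_Y tail_pred_mem_D[OF D]]
    by metis
qed

lemma zeta_rspan_osp:
  assumes "lo \<le> c" "c \<le> tail"
  shows "\<zeta> c \<in> rspan Y"
  using assms(2)
proof (induction rule: inc_induct)
  case base
  show ?case by (rule zeta_tail_rspan)
next
  case (step n)
  then have n: "n \<in> Y" using assms(1) Y_interval by simp
  then have "\<alpha> n = vdiff (\<zeta> n) (\<zeta> (Suc n))" using simple_nontail Y_subset step.hyps(2) by blast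
  then have "\<zeta> n = vadd (\<alpha> n) (\<zeta> (Suc n))" by (auto simp: fun_eq_iff vec_apply)
  then show ?case using vspan_add vspan_base[OF finite_Y n] step.IH by metis
qed

lemma parity_invol_osp: "parity_invol (wperm k nn mm Y)"
proof -
  have main: "wperm k nn mm Y j \<in> {1..dimV} \<and> wperm k nn mm Y (wperm k nn mm Y j) = j \<and>
      odd_at (wperm k nn mm Y j) = odd_at j \<and> (k \<noteq> GL \<longrightarrow> wperm k nn mm Y (dual j) = dual (wperm k nn mm Y j))"
    if j: "j \<in> {1..dimV}" for j
  proof -
    have pj: "dual j \<in> {1..dimV}" using dual_range[OF j] .
    have ppj: "dual (dual j) = j" using dual_dual[OF j] .
    have iff: "(lo \<le> dual j \<and> dual j \<le> dual lo) \<longleftrightarrow> (lo \<le> j \<and> j \<le> dual lo)"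
      using j lo_dual_bounds lo_ge by (auto simp: dual_eq)
    show ?thesis
    proof (cases "lo \<le> j \<and> j \<le> dual lo")
      case True
      have w1: "wperm k nn mm Y j = dual j" using wperm_osp[OF j] True by simp
      have w2: "wperm k nn mm Y (dual j) = j" using wperm_osp[OF pj] iff True ppj by simp
      show ?thesis unfolding w1 w2 using pj odd_at_dual[OF j] ppj by simp
    next
      case False
      have w1: "wperm k nn mm Y j = j" using wperm_osp[OF j] False by simp
      have w2: "wperm k nn mm Y (dual j) = dual j" using wperm_osp[OF pj] iff False by simp
      show ?thesis unfolding w1 w2 using j ppj by simp
    qed
  qed
  show ?thesis unfolding parity_invol_def using main by blast
qed

lemma zeta_diff_wperm_osp: assumes j: "j \<in> Crd" shows "vdiff (\<zeta> (wperm k nn mm Y j)) (\<zeta> j) \<in> rspan Y"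
proof -
  have jr: "j \<in> {1..dimV}" using j Crd_subset by auto
  have jq: "j \<le> tail" using j Crd_osp[OF not_GL] by auto
  show ?thesis
  proof (cases "lo \<le> j")
    case True
    have jJ: "lo \<le> j \<and> j \<le> dual lo" using True jq lo_dual_bounds by auto
    have w: "wperm k nn mm Y j = dual j" using wperm_osp[OF jr] jJ by simp
    have e: "vdiff (\<zeta> (dual j)) (\<zeta> j) = vsmul (-2) (\<zeta> j)"
      unfolding zeta_dual[OF not_GL jr] by (rule ext) (simp add: vec_apply)
    show ?thesis unfolding w e using vspan_smul zeta_rspan_osp[OF True jq] by blast
  next
    case False
    have w: "wperm k nn mm Y j = j" using wperm_osp[OF jr] False by simp
    show ?thesis unfolding w zeta_diff_self by (rule vspan_zero)
  qed
qed

end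

lemma good_block_cmp: assumes adm: "admissible k nn mm S" and aS: "a \<in> S"
  shows "good_block (cmp S a)"
proof -
  have SI: "S \<subseteq> Nodes" using adm by (simp add: admissible_def)
  show ?thesis
  proof (cases "osp_comp k nn mm (cmp S a)")
    case True
    show ?thesis unfolding good_block_def
      using finite_Y[OF SI aS True] parity_invol_osp[OF SI aS True] zeta_diff_wperm_osp[OF SI aS True] by blast
  next
    case False
    show ?thesis unfolding good_block_def
      using finite_X[OF SI aS False] parity_invol_typeA[OF SI aS False adm] zeta_diff_wperm_typeA[OF SI aS False] by blast
  qed
qed

lemma w_l_eq_w_prod: "w_l k nn mm S = w_prod (map (cmp S) (sorted_list_of_set (comp_mins k nn mm S)))"
  unfolding w_l_def w_prod_def foldr_map by (simp add: o_def)

lemma component_blocks: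
  assumes "admissible k nn mm S"
  defines "cs \<equiv> map (cmp S) (sorted_list_of_set (comp_mins k nn mm S))"
  shows "\<forall>X\<in>set cs. good_block X \<and> X \<subseteq> S" and "distinct cs"
    and "\<And>X Y. X \<in> set cs \<Longrightarrow> Y \<in> set cs \<Longrightarrow> X \<noteq> Y \<Longrightarrow> orth_blocks X Y"
proof -
  have "finite S" using assms(1) finite_Nodes finite_subset by (auto simp: admissible_def)
  then have fin: "finite (comp_mins k nn mm S)"
    by (rule finite_subset[rotated]) (auto simp: comp_mins_def)
  then show "\<forall>X\<in>set cs. good_block X \<and> X \<subseteq> S"
    unfolding cs_def using good_block_cmp[OF assms(1)] cmp_subset by (auto simp: comp_mins_def)
  have "inj_on (cmp S) (comp_mins k nn mm S)"
  proof (rule inj_onI)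
    fix a b assume "a \<in> comp_mins k nn mm S" "b \<in> comp_mins k nn mm S" "cmp S a = cmp S b"
    then show "a = b" unfolding comp_mins_def by (metis (mono_tags, lifting) mem_Collect_eq)
  qed
  then show "distinct cs"
    unfolding cs_def distinct_map using fin by simp
  show "orth_blocks X Y" if XY: "X \<in> set cs" "Y \<in> set cs" and ne: "X \<noteq> Y" for X Y
  proof -
    obtain a a' where "X = cmp S a" "Y = cmp S a'" using XY unfolding cs_def set_map by blast
    then show ?thesis unfolding orth_blocks_def using cmp_orth ne by blast
  qed
qed

lemma w_l_commutes_on_root_lattice:
  assumes adm: "admissible k nn mm S"
    and dyn: "dynkin_aut k nn mm \<tau>"
    and simple_tau: "\<forall>a\<in>S. \<alpha> (\<tau> a) = vneg (w_l k nn mm S (\<alpha> a))"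
    and T_linear: "vlinear T"
    and T_simple: "\<forall>a\<in>Nodes. T (\<alpha> a) = \<alpha> (\<tau> a)"
  shows "\<forall>x\<in>root_lattice k nn mm. T (w_l k nn mm S x) = w_l k nn mm S (T x)"
proof -
  define cs where "cs = map (cmp S) (sorted_list_of_set (comp_mins k nn mm S))"
  note blocks = component_blocks[OF adm, folded cs_def]
  have "finite S" using adm finite_Nodes finite_subset by (auto simp: admissible_def)
  have W: "w_l k nn mm S = w_prod cs" unfolding cs_def by (rule w_l_eq_w_prod)
  interpret twisted_commutation k nn mm S \<tau> T "w_l k nn mm S"
  proof
    show "S \<subseteq> Nodes" using adm by (simp add: admissible_def)
    show "bij_betw \<tau> Nodes Nodes"
      and "\<And>a b. a \<in> Nodes \<Longrightarrow> b \<in> Nodes \<Longrightarrow> \<langle>\<alpha> (\<tau> a), \<alpha> (\<tau> b)\<rangle> = \<langle>\<alpha> a, \<alpha> b\<rangle>"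
      using dyn by (simp_all add: dynkin_aut_def)
    show "vlinear T" by (fact T_linear)
    show "\<And>a. a \<in> Nodes \<Longrightarrow> T (\<alpha> a) = \<alpha> (\<tau> a)" using T_simple by blast
    show "\<And>a. a \<in> S \<Longrightarrow> \<alpha> (\<tau> a) = vneg (w_l k nn mm S (\<alpha> a))" using simple_tau by blast
    show "vlinear (w_l k nn mm S)" unfolding W by (rule vlinear_w_prod)
    show "\<And>x. in_h x \<Longrightarrow> in_h (w_l k nn mm S x)"
      and "\<And>x y. in_h x \<Longrightarrow> in_h y \<Longrightarrow> \<langle>w_l k nn mm S x, w_l k nn mm S y\<rangle> = \<langle>x, y\<rangle>"
      unfolding W using blocks(1) in_h_w_prod w_prod_isometry by blast+
    show "\<And>x. in_h x \<Longrightarrow> w_l k nn mm S (w_l k nn mm S x) = x"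
      unfolding W using w_prod_involutive blocks by blast
    show "\<And>x. in_h x \<Longrightarrow> vdiff (w_l k nn mm S x) x \<in> rspan S"
      unfolding W using w_prod_diff_rspan[OF blocks(1) \<open>finite S\<close>] by blast
    show "\<And>x. in_h x \<Longrightarrow> (\<And>b. b \<in> S \<Longrightarrow> \<langle>x, \<alpha> b\<rangle> = 0) \<Longrightarrow> w_l k nn mm S x = x"
      unfolding W using w_prod_fixes_orth[OF blocks(1)] by blast
  qed
  show ?thesis
  proof
    fix x assume "x \<in> root_lattice k nn mm"
    then obtain z :: "nat \<Rightarrow> int" where "x = vsum (\<lambda>a. vsmul (of_int (z a)) (\<alpha> a)) Nodes"
      unfolding root_lattice_def by blast
    then have "x \<in> rspan Nodes" by (rule vspanI)
    then show "T (w_l k nn mm S x) = w_l k nn mm S (T x)" by (rule T_W_commute)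
  qed
qed

end

theorem mainTheorem5:
  fixes k :: kind and nn mm :: nat and S :: "nat set"
    and \<tau> :: "nat \<Rightarrow> nat" and T :: "(nat \<Rightarrow> real) \<Rightarrow> nat \<Rightarrow> real"
  assumes "valid_params k nn mm"
    and "admissible k nn mm S"
    and "even_perm k nn mm \<tau>"
    and "dynkin_aut k nn mm \<tau>"
    and "\<forall>a\<in>S. simple k nn mm (\<tau> a) = vneg (w_l k nn mm S (simple k nn mm a))"
    and "\<forall>x y. T (vadd x y) = vadd (T x) (T y)"
    and "\<forall>r x. T (vsmul r x) = vsmul r (T x)"
    and "\<forall>a\<in>sr_idx k nn mm. T (simple k nn mm a) = simple k nn mm (\<tau> a)"
    and "\<forall>a\<in>sr_idx k nn mm - S. \<forall>b\<in>S.
           form k nn mm (vadd (simple k nn mm a) (w_l k nn mm S (simple k nn mm (\<tau> a))))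
                        (simple k nn mm b) = 0"
  shows "\<forall>x\<in>root_lattice k nn mm. T (w_l k nn mm S x) = w_l k nn mm S (T x)"
proof -
  interpret super_setting k nn mm by unfold_locales (fact assms(1))
  have "vlinear T" unfolding vlinear_def using assms(6,7) by blast
  then show ?thesis
    using w_l_commutes_on_root_lattice[OF assms(2,4,5)] assms(8) by blast
qed

end
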